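(* Let $m\ge4$ and let $T^m(x)=1+\sum_{n\ge1}t_nx^n$ be the cluster generating function for the consecutive pattern $\tau_m=1\,m\,2\,3\cdots(m-2)(m-1)$ (defined in the context), which satisfies \[T^m(x) = 1 + \frac{x}{1+x}\,T^m\!\left(\frac{x}{1+x^{m-2}}\right).\] Let $B^m(x)=\frac{x}{1+x^{m-2}}$, $B^m_0(x)=x$ and $B^m_j(x)=B^m(B^m_{j-1}(x))$ for $j\ge1$. Then this functional equation has the solution \[T^m(x) = 1 + \sum_{n=0}^\infty \prod_{j=0}^n \frac{B^m_j(x)}{1+B^m_j(x)},\] the infinite sum converging as a formal power series in $x$.
   Context: For a consecutive pattern $\sigma$ of length $m$: an occurrence of $\sigma$ in a permutation is a block of $m$ consecutive positions whose entries have the same relative order as $\sigma$. A $k$-cluster of length $n\ge m$ is a permutation of $\{1,\dots,n\}$ containing precisely $k$ occurrences of $\sigma$, such that every entry lies in at least one occurrence and any two successive occurrences overlap in at least one position. Let $s_{n,k}$ be the number of $k$-clusters of length $n$, with $s_{1,0}=1$ and $s_{n,k}=0$ otherwise for $n<m$. Set $t_n=\sum_k(-1)^ks_{n,k}$ and define the cluster generating function $T(x)=1+\sum_{n\ge1}t_nx^n$. Here $\sigma=\tau_m=1\,m\,2\,3\cdots(m-1)$, e.g. $\tau_4=1423$, $\tau_5=15234$. *)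

theory Defs
  imports "HOL-Computational_Algebra.Formal_Power_Series"
begin

definition order_iso :: "nat list \<Rightarrow> nat list \<Rightarrow> bool" where
  "order_iso xs ys \<longleftrightarrow> length xs = length ys \<and>
     (\<forall>i < length xs. \<forall>j < length xs. (xs ! i < xs ! j) = (ys ! i < ys ! j))"

definition occs :: "nat list \<Rightarrow> nat list \<Rightarrow> nat set" where
  "occs sigma p = {i. i + length sigma \<le> length p \<and>
                      order_iso (take (length sigma) (drop i p)) sigma}"

definition perms :: "nat \<Rightarrow> nat list set" where
  "perms n = {p. distinct p \<and> set p = {1..n}}"

definition is_cluster :: "nat list \<Rightarrow> nat list \<Rightarrow> bool" where
  "is_cluster sigma p \<longleftrightarrow>
     (\<forall>j < length p. \<exists>i \<in> occs sigma p. i \<le> j \<and> j < i + length sigma) \<and>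
     (\<forall>i \<in> occs sigma p. \<forall>i' \<in> occs sigma p.
        i < i' \<and> (\<forall>l \<in> occs sigma p. \<not> (i < l \<and> l < i')) \<longrightarrow> i' < i + length sigma)"

definition s_cl :: "nat list \<Rightarrow> nat \<Rightarrow> nat \<Rightarrow> nat" where
  "s_cl sigma n k =
     (if n < length sigma then (if n = 1 \<and> k = 0 then 1 else 0)
      else card {p \<in> perms n. is_cluster sigma p \<and> card (occs sigma p) = k})"

text \<open>t_n = sum_k (-1)^k s_{n,k}; a permutation of length n has at most n occurrences.\<close>
definition t_cl :: "nat list \<Rightarrow> nat \<Rightarrow> int" where
  "t_cl sigma n = (\<Sum>k\<le>n. (-1) ^ k * int (s_cl sigma n k))"

definition T_cl :: "nat list \<Rightarrow> rat fps" where
  "T_cl sigma = Abs_fps (\<lambda>n. if n = 0 then 1 else of_int (t_cl sigma n))"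

definition tau :: "nat \<Rightarrow> nat list" where
  "tau m = [1, m] @ [2..<m]"

definition Bm :: "nat \<Rightarrow> rat fps" where
  "Bm m = fps_X / (1 + fps_X ^ (m - 2))"

definition Bmj :: "nat \<Rightarrow> nat \<Rightarrow> rat fps" where
  "Bmj m j = ((\<lambda>f. fps_compose (Bm m) f) ^^ j) fps_X"

end

(* A cluster of tau_m (m >= 4) starts with its minimum, and two successive occurrences of tau_m
   overlap in one or two entries. Stripping the first occurrence and standardizing is a bijection
   between clusters with at least two occurrences and pairs (shorter cluster, value R + 1 of the
   second entry) subject to one inequality on R. Summing the signs (-1)^(number of occurrences)
   along this decomposition, with binomial weights in the second entry to close the recursion,
   yields a recursion for t_n that is the coefficient form of T(x) = 1 + x/(1+x) T(B(x)).
   Iterating the functional equation n times leaves a remainder that is a product of n + 1 series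
   without constant term, so the partial sums converge x-adically. *)

theory Submission
  imports Defs
begin

section \<open>Permutations in one-line notation\<close>

definition lift :: "nat \<Rightarrow> nat \<Rightarrow> nat" where
  "lift v x = (if v \<le> x then Suc x else x)"

definition unlift :: "nat \<Rightarrow> nat \<Rightarrow> nat" where
  "unlift v x = (if v < x then x - 1 else x)"

lemma lift_less_lift_iff [simp]: "lift v x < lift v y \<longleftrightarrow> x < y"
  by (simp add: lift_def)

lemma lift_less_iff [simp]: "lift v x < v \<longleftrightarrow> x < v"
  by (simp add: lift_def)

lemma inj_lift: "inj (lift v)"
  by (rule injI) (simp add: lift_def split: if_splits)

lemma unlift_lift [simp]: "unlift v (lift v x) = x"
  by (simp add: lift_def unlift_def)

lemma lift_unlift: "x \<noteq> v \<Longrightarrow> lift v (unlift v x) = x"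
  by (auto simp: lift_def unlift_def)

lemma unlift_less_unlift_iff: "x \<noteq> v \<Longrightarrow> y \<noteq> v \<Longrightarrow> unlift v x < unlift v y \<longleftrightarrow> x < y"
  by (auto simp: unlift_def)

lemma lift_image_atLeastAtMost:
  assumes "v \<in> {1..Suc n}"
  shows "lift v ` {1..n} = {1..Suc n} - {v}"
proof
  show "lift v ` {1..n} \<subseteq> {1..Suc n} - {v}"
    using assms by (auto simp: lift_def)
  show "{1..Suc n} - {v} \<subseteq> lift v ` {1..n}"
  proof
    fix x assume "x \<in> {1..Suc n} - {v}"
    then have "unlift v x \<in> {1..n}" "x = lift v (unlift v x)"
      using assms by (auto simp: unlift_def lift_def)
    then show "x \<in> lift v ` {1..n}" by blast
  qed
qed

text \<open>\<open>perm_tl p\<close> is the tail of \<open>p\<close> standardized to a permutation; \<open>perm_cons\<close> inverts it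
  given the first entry.\<close>

definition perm_cons :: "nat \<Rightarrow> nat list \<Rightarrow> nat list" where
  "perm_cons v q = v # map (lift v) q"

definition perm_tl :: "nat list \<Rightarrow> nat list" where
  "perm_tl p = map (unlift (hd p)) (tl p)"

lemma length_perms: "p \<in> perms n \<Longrightarrow> length p = n"
  unfolding perms_def using distinct_card by fastforce

lemma finite_perms: "finite (perms n)"
proof (rule finite_subset)
  show "perms n \<subseteq> {xs. set xs \<subseteq> {1..n} \<and> length xs = n}"
    using length_perms by (auto simp: perms_def)
qed (simp add: finite_lists_length_eq)

lemma perms_ge_1: "p \<in> perms n \<Longrightarrow> x \<in> set p \<Longrightarrow> 1 \<le> x"
  unfolding perms_def by auto

lemma perms_1: "perms 1 = {[1]}"
proof (intro set_eqI iffI)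
  fix p assume p: "p \<in> perms 1"
  then obtain a where "p = [a]" using length_perms[OF p] by (cases p) auto
  then show "p \<in> {[1]}" using p by (simp add: perms_def)
qed (simp add: perms_def)

lemma perm_tl_perm_cons [simp]: "perm_tl (perm_cons v q) = q"
  by (simp add: perm_tl_def perm_cons_def map_idI)

lemma hd_perm_cons [simp]: "hd (perm_cons v q) = v"
  by (simp add: perm_cons_def)

lemma perm_cons_in_perms:
  assumes v: "v \<in> {1..Suc n}" and q: "q \<in> perms n"
  shows "perm_cons v q \<in> perms (Suc n)"
proof -
  have "distinct q" "set q = {1..n}" using q by (auto simp: perms_def)
  then show ?thesis
    using v lift_image_atLeastAtMost[OF v] inj_lift[of v]
    by (auto simp: perms_def perm_cons_def distinct_map inj_on_subset[OF inj_lift])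
qed

lemma
  assumes p: "p \<in> perms (Suc n)"
  shows perm_tl_in_perms: "perm_tl p \<in> perms n"
    and perm_cons_hd_perm_tl: "perm_cons (hd p) (perm_tl p) = p"
    and hd_in_perms: "hd p \<in> {1..Suc n}"
proof -
  obtain v q where pq: "p = v # q" using length_perms[OF p] by (cases p) auto
  have d: "distinct q" "v \<notin> set q" and s: "insert v (set q) = {1..Suc n}"
    using p pq by (auto simp: perms_def)
  then show "hd p \<in> {1..Suc n}" using pq by auto
  have "map (lift v) (map (unlift v) q) = q"
    using d by (auto intro!: map_idI simp: lift_def unlift_def)
  then show "perm_cons (hd p) (perm_tl p) = p"
    by (simp add: perm_cons_def perm_tl_def pq)
  have "inj_on (unlift v) (set q)"
    using d by (intro inj_onI) (metis lift_unlift)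
  moreover have "unlift v ` set q = {1..n}"
  proof -
    have "set q = {1..Suc n} - {v}" using s d by auto
    also have "\<dots> = lift v ` {1..n}" using s by (intro lift_image_atLeastAtMost[symmetric]) auto
    finally show ?thesis by (simp add: image_image)
  qed
  ultimately show "perm_tl p \<in> perms n"
    using d by (simp add: perms_def perm_tl_def pq distinct_map)
qed

section \<open>Order isomorphism and occurrences\<close>

lemma order_iso_refl: "order_iso xs xs"
  and order_iso_sym: "order_iso xs ys \<Longrightarrow> order_iso ys xs"
  and order_iso_trans: "order_iso xs ys \<Longrightarrow> order_iso ys zs \<Longrightarrow> order_iso xs zs"
  by (simp_all add: order_iso_def)

lemma order_iso_length: "order_iso xs ys \<Longrightarrow> length xs = length ys"
  and order_iso_nth:
    "order_iso xs ys \<Longrightarrow> i < length xs \<Longrightarrow> j < length xs \<Longrightarrow> (xs ! i < xs ! j) = (ys ! i < ys ! j)"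
  by (simp_all add: order_iso_def)

lemma order_iso_take: "order_iso xs ys \<Longrightarrow> order_iso (take a xs) (take a ys)"
  and order_iso_drop: "order_iso xs ys \<Longrightarrow> order_iso (drop a xs) (drop a ys)"
  by (auto simp: order_iso_def)

lemma order_iso_map:
  assumes "\<And>x y. x \<in> set xs \<Longrightarrow> y \<in> set xs \<Longrightarrow> f x < f y \<longleftrightarrow> x < y"
  shows "order_iso (map f xs) xs"
  using assms by (simp add: order_iso_def)

lemma occs_order_iso: "order_iso p p' \<Longrightarrow> occs sigma p = occs sigma p'"
  unfolding occs_def
  by (metis (no_types, lifting) order_iso_drop order_iso_length order_iso_sym order_iso_take
      order_iso_trans)

lemma is_cluster_order_iso: "order_iso p p' \<Longrightarrow> is_cluster sigma p = is_cluster sigma p'"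
  unfolding is_cluster_def by (simp add: occs_order_iso order_iso_length)

lemma finite_occs: "finite (occs sigma p)"
  by (rule finite_subset[of _ "{..length p}"]) (auto simp: occs_def)

lemma Suc_in_occs_Cons: "Suc i \<in> occs sigma (x # xs) \<longleftrightarrow> i \<in> occs sigma xs"
  unfolding occs_def by simp

lemma in_occs_drop_iff: "g \<le> length p \<Longrightarrow> i \<in> occs sigma (drop g p) \<longleftrightarrow> i + g \<in> occs sigma p"
  unfolding occs_def by (auto simp: add.commute)

lemma Suc_in_occs_perm_cons: "Suc i \<in> occs sigma (perm_cons v q) \<longleftrightarrow> i \<in> occs sigma q"
proof -
  have "occs sigma (map (lift v) q) = occs sigma q"
    by (intro occs_order_iso order_iso_map) simp
  then show ?thesis unfolding perm_cons_def by (simp add: Suc_in_occs_Cons)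
qed

lemma order_iso_perm_tl:
  assumes "distinct p"
  shows "order_iso (perm_tl p) (tl p)"
  unfolding perm_tl_def
proof (rule order_iso_map)
  fix x y assume "x \<in> set (tl p)" "y \<in> set (tl p)"
  then have "x \<noteq> hd p" "y \<noteq> hd p" using assms by (cases p; auto)+
  then show "unlift (hd p) x < unlift (hd p) y \<longleftrightarrow> x < y" by (rule unlift_less_unlift_iff)
qed

lemma perm_tl_funpow:
  assumes p: "p \<in> perms n" and j: "j \<le> n"
  shows "(perm_tl ^^ j) p \<in> perms (n - j) \<and> order_iso ((perm_tl ^^ j) p) (drop j p)"
  using j
proof (induction j)
  case 0
  show ?case using p by (simp add: order_iso_refl)
next
  case (Suc j)
  let ?x = "(perm_tl ^^ j) p"
  have x: "?x \<in> perms (Suc (n - Suc j))" and o: "order_iso ?x (drop j p)"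
    using Suc by (simp_all add: Suc_diff_Suc)
  have "order_iso (perm_tl ?x) (tl ?x)"
    using x by (intro order_iso_perm_tl) (simp add: perms_def)
  moreover have "order_iso (tl ?x) (drop (Suc j) p)"
    using order_iso_drop[OF o, of 1] by (simp add: drop_Suc)
  ultimately have "order_iso (perm_tl ?x) (drop (Suc j) p)" by (rule order_iso_trans)
  then show ?case using perm_tl_in_perms[OF x] by simp
qed

lemma hd_eq_1_iff:
  assumes p: "p \<in> perms (Suc n)"
  shows "hd p = 1 \<longleftrightarrow> (\<forall>i < Suc n. 0 < i \<longrightarrow> p ! 0 < p ! i)"
proof -
  have l: "length p = Suc n" and d: "distinct p" "set p = {1..Suc n}"
    using length_perms[OF p] p by (auto simp: perms_def)
  have hd: "hd p = p ! 0" using l by (cases p) auto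
  have entries: "i < Suc n \<Longrightarrow> p ! i \<in> {1..Suc n}" for i
    using d l by (metis nth_mem)
  show ?thesis
  proof
    assume h: "hd p = 1"
    show "\<forall>i < Suc n. 0 < i \<longrightarrow> p ! 0 < p ! i"
    proof (intro allI impI)
      fix i assume i: "i < Suc n" "0 < i"
      then have "p ! i \<noteq> p ! 0" using d l by (simp add: nth_eq_iff_index_eq)
      then show "p ! 0 < p ! i" using entries[OF i(1)] h hd by auto
    qed
  next
    assume min: "\<forall>i < Suc n. 0 < i \<longrightarrow> p ! 0 < p ! i"
    have "1 \<in> set p" using d by simp
    then obtain i where i: "i < Suc n" "p ! i = 1" using l by (metis in_set_conv_nth)
    then show "hd p = 1"
      using min entries[of 0] hd by (cases "i = 0") fastforce+
  qed
qed

section \<open>Occurrences and clusters of \<open>\<tau>\<^sub>m\<close>\<close>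

lemma length_tau: "m \<ge> 2 \<Longrightarrow> length (tau m) = m"
  by (simp add: tau_def)

lemma tau_nth: "j < m \<Longrightarrow> tau m ! j = (if j = 0 then 1 else if j = 1 then m else j)"
  by (auto simp: tau_def nth_append nth_Cons split: nat.split)

lemma distinct_tau: "m \<ge> 2 \<Longrightarrow> distinct (tau m)"
  by (simp add: tau_def)

lemma order_isoI:
  assumes "length xs = length ys" and "distinct ys"
    and "\<And>i j. i < length ys \<Longrightarrow> j < length ys \<Longrightarrow> ys ! i < ys ! j \<Longrightarrow> xs ! i < xs ! j"
  shows "order_iso xs ys"
  unfolding order_iso_def
proof (intro conjI allI impI iffI)
  fix i j assume ij: "i < length xs" "j < length xs" and "xs ! i < xs ! j"
  then have "\<not> ys ! j < ys ! i" "i \<noteq> j" using assms by (auto dest: order.asym)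
  moreover have "ys ! i \<noteq> ys ! j"
    using ij assms(1,2) \<open>i \<noteq> j\<close> by (simp add: nth_eq_iff_index_eq)
  ultimately show "ys ! i < ys ! j" by simp
qed (use assms in auto)

lemma chain_less:
  assumes "\<And>j. a \<le> j \<Longrightarrow> Suc j < m \<Longrightarrow> f j < (f (Suc j) :: nat)"
  shows "a \<le> i \<Longrightarrow> i < j \<Longrightarrow> j < m \<Longrightarrow> f i < f j"
proof (induction j)
  case (Suc j)
  then show ?case using assms by (cases "i = j") (auto intro: less_trans)
qed simp

lemma order_iso_tau_iff:
  assumes m: "m \<ge> 3" and len: "length xs = m" and d: "distinct xs"
  shows "order_iso xs (tau m) \<longleftrightarrow>
    (\<forall>j. 0 < j \<and> j < m \<longrightarrow> xs ! 0 < xs ! j) \<and>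
    (\<forall>j. 1 < j \<and> j < m \<longrightarrow> xs ! j < xs ! 1) \<and>
    (\<forall>j. 2 \<le> j \<and> Suc j < m \<longrightarrow> xs ! j < xs ! Suc j)"
  (is "_ \<longleftrightarrow> ?first_min \<and> ?second_max \<and> ?rest_incr")
proof
  assume iso: "order_iso xs (tau m)"
  have "xs ! i < xs ! j \<longleftrightarrow> tau m ! i < tau m ! j" if "i < m" "j < m" for i j
    using order_iso_nth[OF iso] len that by simp
  then show "?first_min \<and> ?second_max \<and> ?rest_incr"
    using m by (auto simp: tau_nth)
next
  assume conds: "?first_min \<and> ?second_max \<and> ?rest_incr"
  then have incr: "2 \<le> i \<Longrightarrow> i < j \<Longrightarrow> j < m \<Longrightarrow> xs ! i < xs ! j" for i j
    using chain_less[of 2 m "\<lambda>j. xs ! j"] by blast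
  show "order_iso xs (tau m)"
  proof (rule order_isoI)
    fix i j assume "i < length (tau m)" "j < length (tau m)" "tau m ! i < tau m ! j"
    then show "xs ! i < xs ! j"
      using conds incr m by (auto simp: length_tau tau_nth split: if_splits)
  qed (use m len in \<open>simp_all add: length_tau distinct_tau\<close>)
qed

lemma in_occs_tau_iff:
  assumes m: "m \<ge> 3" and d: "distinct p"
  shows "i \<in> occs (tau m) p \<longleftrightarrow> i + m \<le> length p \<and>
    (\<forall>j. 0 < j \<and> j < m \<longrightarrow> p ! i < p ! (i + j)) \<and>
    (\<forall>j. 1 < j \<and> j < m \<longrightarrow> p ! (i + j) < p ! (i + 1)) \<and>
    (\<forall>j. 2 \<le> j \<and> Suc j < m \<longrightarrow> p ! (i + j) < p ! (i + Suc j))"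
proof (cases "i + m \<le> length p")
  case True
  let ?w = "take m (drop i p)"
  have "length ?w = m" "distinct ?w" using True d by simp_all
  moreover have "j < m \<Longrightarrow> ?w ! j = p ! (i + j)" for j using True by simp
  ultimately show ?thesis
    using True m unfolding occs_def
    by (auto simp: length_tau order_iso_tau_iff simp del: nth_take)
next
  case False
  then show ?thesis unfolding occs_def using m by (simp add: length_tau)
qed

lemma occs_tau_chain_less:
  assumes m: "m \<ge> 3" and d: "distinct p" and i: "i \<in> occs (tau m) p"
  shows "2 \<le> a \<Longrightarrow> a < b \<Longrightarrow> b < m \<Longrightarrow> p ! (i + a) < p ! (i + b)"
  using chain_less[of 2 m "\<lambda>j. p ! (i + j)"] in_occs_tau_iff[OF m d, of i] i by blast

text \<open>An occurrence starting at \<open>i'\<close> has a descent at \<open>i' + 1\<close>, whereas an occurrence of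
  \<open>\<tau>\<^sub>m\<close> at \<open>i\<close> ascends at \<open>i\<close> and at \<open>i + 2, \<dots>, i + m - 2\<close>.\<close>

lemma occs_tau_overlap:
  assumes m: "m \<ge> 4" and d: "distinct p" and i: "i \<in> occs (tau m) p" and i': "i' \<in> occs (tau m) p"
    and lt: "i < i'" "i' < i + m"
  shows "i' = i + (m - 2) \<or> i' = i + (m - 1)"
proof (rule ccontr)
  assume nc: "\<not> ?thesis"
  have m3: "m \<ge> 3" using m by simp
  note ci = in_occs_tau_iff[OF m3 d, of i] and ci' = in_occs_tau_iff[OF m3 d, of i']
  show False
  proof (cases "i' = i + 1")
    case True
    have "p ! (i + 2) < p ! (i + 1)" using ci i m by auto
    moreover have "p ! i' < p ! (i' + 1)" using ci' i' m by auto
    ultimately show False using True by simp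
  next
    case False
    define dd where "dd = i' - i"
    have dd: "2 \<le> dd" "dd + 3 \<le> m" using lt nc False m unfolding dd_def by auto
    have "p ! (i + (dd + 1)) < p ! (i + (dd + 2))" using occs_tau_chain_less[OF m3 d i, of "dd+1" "dd+2"] dd by simp
    moreover have "p ! (i' + 2) < p ! (i' + 1)" using ci' i' m by auto
    moreover have "i' = i + dd" using lt unfolding dd_def by simp
    ultimately show False by (simp add: add.assoc)
  qed
qed

lemma is_cluster_tau_iff:
  assumes "m \<ge> 2"
  shows "is_cluster (tau m) p \<longleftrightarrow>
    (\<forall>j < length p. \<exists>i \<in> occs (tau m) p. i \<le> j \<and> j < i + m) \<and>
    (\<forall>i \<in> occs (tau m) p. \<forall>i' \<in> occs (tau m) p.
        i < i' \<and> (\<forall>l \<in> occs (tau m) p. \<not> (i < l \<and> l < i')) \<longrightarrow> i' < i + m)"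
  unfolding is_cluster_def using assms by (simp add: length_tau)

lemma occs_tau_bound: "m \<ge> 2 \<Longrightarrow> i \<in> occs (tau m) p \<Longrightarrow> i + m \<le> length p"
  unfolding occs_def by (simp add: length_tau)

lemma cluster_0_in_occs:
  assumes m: "m \<ge> 2" and c: "is_cluster (tau m) p" and l: "length p \<ge> 1"
  shows "0 \<in> occs (tau m) p"
proof -
  obtain i where "i \<in> occs (tau m) p" "i \<le> 0" using c l unfolding is_cluster_tau_iff[OF m] by force
  then show ?thesis by simp
qed

lemma cluster_length_single_occ:
  assumes m: "m \<ge> 2" and c: "is_cluster (tau m) p" and l: "length p \<ge> 1"
    and s: "\<forall>i \<in> occs (tau m) p. i = 0"
  shows "length p \<le> m"
proof -
  obtain i where "i \<in> occs (tau m) p" "i \<le> length p - 1" "length p - 1 < i + m"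
    using c l unfolding is_cluster_tau_iff[OF m] by (meson diff_less zero_less_one less_le_trans)
  then show ?thesis using s by force
qed

lemma is_cluster_single_occ:
  assumes m: "m \<ge> 2" and s: "occs (tau m) p = {0}" and l: "length p \<le> m"
  shows "is_cluster (tau m) p"
  unfolding is_cluster_tau_iff[OF m] using s l by auto

lemma cluster_second_occ:
  assumes m: "m \<ge> 4" and d: "distinct p" and c: "is_cluster (tau m) p"
    and ex: "\<exists>i \<in> occs (tau m) p. i \<noteq> 0"
  obtains g where "g \<in> occs (tau m) p" "0 < g" "\<forall>i \<in> occs (tau m) p. 0 < i \<longrightarrow> g \<le> i"
    "g = m - 2 \<or> g = m - 1"
proof -
  let ?O = "occs (tau m) p"
  have m2: "m \<ge> 2" using m by simp
  define g where "g = (LEAST i. i \<in> ?O \<and> i \<noteq> 0)"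
  have "g \<in> ?O \<and> g \<noteq> 0" unfolding g_def by (rule LeastI_ex) (use ex in blast)
  then have g: "g \<in> ?O" "0 < g" by simp_all
  have gmin: "\<forall>i \<in> ?O. 0 < i \<longrightarrow> g \<le> i" unfolding g_def by (auto intro: Least_le)
  have "length p \<ge> 1" using occs_tau_bound[OF m2 g(1)] m by simp
  then have z: "0 \<in> ?O" by (rule cluster_0_in_occs[OF m2 c])
  have "g < m"
    using c z g gmin unfolding is_cluster_tau_iff[OF m2] by force
  then have "g = 0 + (m - 2) \<or> g = 0 + (m - 1)" using occs_tau_overlap[OF m d z g(1)] g by simp
  then show ?thesis using that g gmin by simp
qed

lemma no_occs_between_drop:
  assumes g: "g \<le> length p"
  shows "(\<forall>l \<in> occs sigma (drop g p). \<not> (a < l \<and> l < b)) \<longleftrightarrow>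
    (\<forall>l \<in> occs sigma p. \<not> (a + g < l \<and> l < b + g))"
proof (intro iffI ballI notI)
  fix l assume none: "\<forall>l \<in> occs sigma (drop g p). \<not> (a < l \<and> l < b)"
    and l: "l \<in> occs sigma p" "a + g < l \<and> l < b + g"
  then have "l - g \<in> occs sigma (drop g p)"
    using in_occs_drop_iff[OF g, of "l - g"] by simp
  then show False using none l by force
next
  fix l assume none: "\<forall>l \<in> occs sigma p. \<not> (a + g < l \<and> l < b + g)"
    and l: "l \<in> occs sigma (drop g p)" "a < l \<and> l < b"
  then show False using in_occs_drop_iff[OF g] by force
qed

lemma is_cluster_drop:
  assumes m: "m \<ge> 2" and c: "is_cluster (tau m) p"
    and g: "g \<in> occs (tau m) p" "0 < g" "g < m" and gmin: "\<forall>i \<in> occs (tau m) p. 0 < i \<longrightarrow> g \<le> i"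
  shows "is_cluster (tau m) (drop g p)"
proof -
  let ?O = "occs (tau m) p" and ?O' = "occs (tau m) (drop g p)"
  have gl: "g \<le> length p" using occs_tau_bound[OF m g(1)] by simp
  have O': "a \<in> ?O' \<longleftrightarrow> a + g \<in> ?O" for a using in_occs_drop_iff[OF gl] .
  have cov: "\<forall>j < length p. \<exists>i \<in> ?O. i \<le> j \<and> j < i + m" and
    ch: "\<forall>i \<in> ?O. \<forall>i' \<in> ?O. i < i' \<and> (\<forall>l \<in> ?O. \<not> (i < l \<and> l < i')) \<longrightarrow> i' < i + m"
    using c unfolding is_cluster_tau_iff[OF m] by blast+
  show ?thesis unfolding is_cluster_tau_iff[OF m]
  proof (intro conjI ballI allI impI)
    fix j assume j: "j < length (drop g p)"
    show "\<exists>i \<in> ?O'. i \<le> j \<and> j < i + m"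
    proof (cases "j < m")
      case True then show ?thesis using O'[of 0] g by force
    next
      case False
      have "j + g < length p" using j by simp
      then obtain i where i: "i \<in> ?O" "i \<le> j + g" "j + g < i + m" using cov by blast
      then have "g \<le> i" using gmin False by (cases "i = 0") auto
      then have "i - g \<in> ?O'" "i - g \<le> j" "j < i - g + m" using O'[of "i - g"] i by auto
      then show ?thesis by blast
    qed
  next
    fix a b assume a: "a \<in> ?O'" and b: "b \<in> ?O'" and ab: "a < b \<and> (\<forall>l \<in> ?O'. \<not> (a < l \<and> l < b))"
    then have "a + g \<in> ?O" "b + g \<in> ?O" "a + g < b + g" "\<forall>l \<in> ?O. \<not> (a + g < l \<and> l < b + g)"
      using O' no_occs_between_drop[OF gl] by auto
    then have "b + g < a + g + m" using ch by blast
    then show "b < a + m" by simp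
  qed
qed

lemma is_cluster_from_drop:
  assumes m: "m \<ge> 2" and gl: "g \<le> length p"
    and z: "0 \<in> occs (tau m) p"
    and g: "g \<in> occs (tau m) p" "0 < g" "g < m" and gmin: "\<forall>i \<in> occs (tau m) p. 0 < i \<longrightarrow> g \<le> i"
    and c: "is_cluster (tau m) (drop g p)"
  shows "is_cluster (tau m) p"
proof -
  let ?O = "occs (tau m) p" and ?O' = "occs (tau m) (drop g p)"
  have O': "a \<in> ?O' \<longleftrightarrow> a + g \<in> ?O" for a using in_occs_drop_iff[OF gl] .
  have cov: "\<forall>j < length (drop g p). \<exists>i \<in> ?O'. i \<le> j \<and> j < i + m" and
    ch: "\<forall>i \<in> ?O'. \<forall>i' \<in> ?O'. i < i' \<and> (\<forall>l \<in> ?O'. \<not> (i < l \<and> l < i')) \<longrightarrow> i' < i + m"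
    using c unfolding is_cluster_tau_iff[OF m] by blast+
  show ?thesis unfolding is_cluster_tau_iff[OF m]
  proof (intro conjI ballI allI impI)
    fix j assume j: "j < length p"
    show "\<exists>i \<in> ?O. i \<le> j \<and> j < i + m"
    proof (cases "j < g")
      case True then show ?thesis using z g by force
    next
      case False
      then have "j - g < length (drop g p)" using j by simp
      then obtain a where a: "a \<in> ?O'" "a \<le> j - g" "j - g < a + m" using cov by blast
      then have "a + g \<in> ?O" "a + g \<le> j" "j < a + g + m" using O' False by auto
      then show ?thesis by blast
    qed
  next
    fix i i' assume i: "i \<in> ?O" and i': "i' \<in> ?O" and ii: "i < i' \<and> (\<forall>l \<in> ?O. \<not> (i < l \<and> l < i'))"
    show "i' < i + m"
    proof (cases "i = 0")
      case True
      then have "i' = g" using gmin g i' ii by force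
      then show ?thesis using True g by simp
    next
      case False
      then have gi: "g \<le> i" using gmin i by auto
      have "i - g \<in> ?O'" "i' - g \<in> ?O'" using O' gi ii i i' by auto
      moreover have "\<forall>l \<in> ?O'. \<not> (i - g < l \<and> l < i' - g)"
        using ii gi no_occs_between_drop[OF gl] by simp
      ultimately have "i' - g < i - g + m" using ch ii gi by force
      then show ?thesis using gi ii by simp
    qed
  qed
qed

lemma cluster_nth_0_less:
  assumes m: "m \<ge> 4"
  shows "distinct p \<Longrightarrow> is_cluster (tau m) p \<Longrightarrow> length p \<ge> 1 \<Longrightarrow> i < length p \<Longrightarrow> 0 < i \<Longrightarrow> p ! 0 < p ! i"
proof (induction "length p" arbitrary: p i rule: less_induct)
  case less
  have m3: "m \<ge> 3" and m2: "m \<ge> 2" using m by simp_all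
  have z: "0 \<in> occs (tau m) p" using cluster_0_in_occs[OF m2 less.prems(2,3)] .
  have win: "j < m \<Longrightarrow> 0 < j \<Longrightarrow> p ! 0 < p ! j" for j
    using in_occs_tau_iff[OF m3 less.prems(1), of 0] z by simp
  show ?case
  proof (cases "\<exists>i \<in> occs (tau m) p. i \<noteq> 0")
    case False
    then have "length p \<le> m" using cluster_length_single_occ[OF m2 less.prems(2,3)] by blast
    then show ?thesis using win less.prems by simp
  next
    case True
    obtain g where g: "g \<in> occs (tau m) p" "0 < g" "\<forall>i \<in> occs (tau m) p. 0 < i \<longrightarrow> g \<le> i"
      "g = m - 2 \<or> g = m - 1" using cluster_second_occ[OF m less.prems(1,2) True] by blast
    have gm: "g < m" using g(4) m by auto
    have gl: "g + m \<le> length p" using occs_tau_bound[OF m2 g(1)] .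
    show ?thesis
    proof (cases "i < m")
      case True then show ?thesis using win less.prems by simp
    next
      case False
      have cd: "is_cluster (tau m) (drop g p)" using is_cluster_drop[OF m2 less.prems(2) g(1,2) gm g(3)] .
      have "drop g p ! 0 < drop g p ! (i - g)"
        using less.hyps[of "drop g p" "i - g"] cd less.prems gm g False gl
        by (simp add: distinct_drop)
      then have "p ! g < p ! i" using gl gm False by simp
      moreover have "p ! 0 < p ! g" using win gm g by simp
      ultimately show ?thesis by simp
    qed
  qed
qed

section \<open>Decomposition of clusters\<close>

text \<open>From here on the pattern is \<open>\<tau>\<^sub>m\<close> with \<open>m = k + 2\<close>.\<close>

lemma perm_cons_1_funpow:
  assumes "\<forall>x \<in> set q. 1 \<le> x"
  shows "(perm_cons 1 ^^ j) q = [1..<Suc j] @ map (\<lambda>x. x + j) q"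
proof (induction j)
  case (Suc j)
  let ?xs = "[1..<Suc j] @ map (\<lambda>x. x + j) q"
  have "\<forall>x \<in> set ?xs. lift 1 x = Suc x"
    using assms by (auto simp: lift_def)
  then have "map (lift 1) ?xs = map Suc ?xs"
    by (simp cong: map_cong del: upt_Suc)
  moreover have "(perm_cons 1 ^^ Suc j) q = perm_cons 1 ?xs"
    using Suc.IH by (simp del: upt_Suc)
  ultimately have "(perm_cons 1 ^^ Suc j) q = 1 # map Suc ?xs"
    by (simp add: perm_cons_def)
  also have "\<dots> = [1..<Suc (Suc j)] @ map (\<lambda>x. x + Suc j) q"
    by (subst upt_conv_Cons) (simp_all add: map_Suc_upt del: upt_Suc)
  finally show ?case .
qed simp

lemma perm_cons_1_funpow_nth:
  assumes "\<forall>x \<in> set q. 1 \<le> x" and "i < length q + j"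
  shows "(perm_cons 1 ^^ j) q ! i = (if i < j then Suc i else q ! (i - j) + j)"
  unfolding perm_cons_1_funpow[OF assms(1)] using assms(2) by (simp add: nth_append del: upt_Suc)

lemma all_Suc_Suc_less_iff:
  "(\<forall>j. 1 < j \<and> j < Suc (Suc k) \<longrightarrow> P j) \<longleftrightarrow> (\<forall>i<k. P (Suc (Suc i)))"
proof (intro iffI allI impI)
  fix j assume all: "\<forall>i<k. P (Suc (Suc i))" and "1 < j \<and> j < Suc (Suc k)"
  then have "j = Suc (Suc (j - 2))" "j - 2 < k" by auto
  then show "P j" using all by metis
qed simp

lemma perm_cons_1_funpow_in_perms: "q \<in> perms n \<Longrightarrow> (perm_cons 1 ^^ j) q \<in> perms (n + j)"
  by (induction j) (auto intro: perm_cons_in_perms)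

lemma in_occs_perm_cons_1_funpow: "i + j \<in> occs sigma ((perm_cons 1 ^^ j) q) \<longleftrightarrow> i \<in> occs sigma q"
  by (induction j) (simp_all add: Suc_in_occs_perm_cons)

lemma perm_tl_funpow_perm_cons_1_funpow: "(perm_tl ^^ j) ((perm_cons 1 ^^ j) q) = q"
proof (induction j)
  case (Suc j)
  have "(perm_tl ^^ Suc j) x = (perm_tl ^^ j) (perm_tl x)" for x
    by (simp add: funpow_swap1)
  then show ?case using Suc by simp
qed simp

text \<open>The permutation whose first entries \<open>1, R + 1, 2, \<dots>, g - 1\<close> (standardized) precede a copy of
  \<open>p\<close> shifted to start at position \<open>g\<close>; every cluster with at least two occurrences has this
  shape, \<open>g\<close> being the position of its second occurrence.\<close>

definition prepend_occ :: "nat \<Rightarrow> nat \<Rightarrow> nat list \<Rightarrow> nat list" where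
  "prepend_occ g R p = perm_cons 1 (perm_cons R ((perm_cons 1 ^^ (g - 2)) p))"

lemma perm_tl_funpow_prepend_occ:
  assumes "g \<ge> 2"
  shows "(perm_tl ^^ g) (prepend_occ g R p) = p"
proof -
  have "g = (g - 2) + 2" using assms by simp
  then have "(perm_tl ^^ g) (prepend_occ g R p) = (perm_tl ^^ (g - 2)) ((perm_tl ^^ 2) (prepend_occ g R p))"
    by (metis funpow_add comp_apply)
  also have "(perm_tl ^^ 2) (prepend_occ g R p) = (perm_cons 1 ^^ (g - 2)) p"
    by (simp add: prepend_occ_def numeral_2_eq_2)
  finally show ?thesis by (simp only: perm_tl_funpow_perm_cons_1_funpow)
qed

lemma prepend_occ_in_perms:
  assumes p: "p \<in> perms n" and g: "g \<ge> 2" and R: "R \<in> {1..n + g - 1}"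
  shows "prepend_occ g R p \<in> perms (n + g)"
proof -
  have L: "(perm_cons 1 ^^ (g - 2)) p \<in> perms (n + (g - 2))"
    using p by (rule perm_cons_1_funpow_in_perms)
  have "perm_cons R ((perm_cons 1 ^^ (g - 2)) p) \<in> perms (Suc (n + (g - 2)))"
    using perm_cons_in_perms[OF _ L, of R] R g by auto
  then have "prepend_occ g R p \<in> perms (Suc (Suc (n + (g - 2))))"
    unfolding prepend_occ_def using perm_cons_in_perms[of 1] by auto
  moreover have "Suc (Suc (n + (g - 2))) = n + g" using g by simp
  ultimately show ?thesis by metis
qed

lemma prepend_occ_inj:
  assumes "prepend_occ g R p = prepend_occ g R' p'" and "g \<ge> 2"
  shows "R = R' \<and> p = p'"
  using assms perm_tl_funpow_prepend_occ[of g R p] perm_tl_funpow_prepend_occ[of g R' p']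
  by (metis hd_perm_cons perm_tl_perm_cons prepend_occ_def)

lemma prepend_occ_eq:
  assumes p: "p \<in> perms n" and R: "R \<ge> 1"
  shows "prepend_occ g R p = 1 # Suc R # map (Suc \<circ> lift R) ((perm_cons 1 ^^ (g - 2)) p)"
proof -
  let ?L = "(perm_cons 1 ^^ (g - 2)) p"
  have "\<forall>x \<in> set ?L. 1 \<le> x"
    using perms_ge_1[OF perm_cons_1_funpow_in_perms[OF p]] by blast
  then have "\<forall>x \<in> set ?L. lift 1 (lift R x) = Suc (lift R x)"
    by (auto simp: lift_def)
  then show ?thesis
    using R by (simp add: prepend_occ_def perm_cons_def lift_def cong: map_cong)
qed

lemma in_occs_prepend_occ:
  assumes "g \<ge> 2"
  shows "i + g \<in> occs sigma (prepend_occ g R p) \<longleftrightarrow> i \<in> occs sigma p"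
proof -
  have "i + g = Suc (Suc (i + (g - 2)))" using assms by simp
  then show ?thesis
    unfolding prepend_occ_def by (metis Suc_in_occs_perm_cons in_occs_perm_cons_1_funpow)
qed

lemma zero_in_occs_prepend_occ_iff:
  assumes k: "k \<ge> 2" and p: "p \<in> perms n" and g: "g \<ge> 2" and R: "R \<in> {1..n + g - 1}"
    and len: "Suc (Suc k) \<le> n + g"
  defines "L \<equiv> (perm_cons 1 ^^ (g - 2)) p"
  shows "0 \<in> occs (tau (Suc (Suc k))) (prepend_occ g R p) \<longleftrightarrow>
    (\<forall>i<k. L ! i < R) \<and> (\<forall>i. Suc i < k \<longrightarrow> L ! i < L ! Suc i)"
proof -
  let ?b = "prepend_occ g R p"
  have b: "?b = 1 # Suc R # map (Suc \<circ> lift R) L"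
    unfolding L_def using p R by (intro prepend_occ_eq) auto
  have Lp: "L \<in> perms (n + (g - 2))"
    unfolding L_def using p by (rule perm_cons_1_funpow_in_perms)
  then have lenL: "length L = n + (g - 2)" and pos: "\<forall>x \<in> set L. 1 \<le> x"
    using length_perms perms_ge_1 by blast+
  have bp: "?b \<in> perms (n + g)" using prepend_occ_in_perms[OF p g R] .
  have nth: "?b ! Suc (Suc i) = Suc (lift R (L ! i))" if "i < k" for i
    using that len lenL by (simp add: b)
  have b1: "?b ! Suc 0 = Suc R" by (simp add: b)
  have first: "\<forall>j. 0 < j \<and> j < Suc (Suc k) \<longrightarrow> ?b ! 0 < ?b ! (0 + j)"
  proof -
    have bp': "?b \<in> perms (Suc (n + g - 1))" using bp g by simp
    have "hd ?b = 1" by (simp add: b)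
    then show ?thesis
      using hd_eq_1_iff[OF bp'] len g by auto
  qed
  have "0 \<in> occs (tau (Suc (Suc k))) ?b \<longleftrightarrow>
      (\<forall>j. 1 < j \<and> j < Suc (Suc k) \<longrightarrow> ?b ! j < ?b ! 1) \<and>
      (\<forall>j. 2 \<le> j \<and> Suc j < Suc (Suc k) \<longrightarrow> ?b ! j < ?b ! Suc j)"
    using in_occs_tau_iff[of "Suc (Suc k)" ?b 0] k len bp first
    by (simp add: perms_def length_perms[OF bp])
  also have "(\<forall>j. 1 < j \<and> j < Suc (Suc k) \<longrightarrow> ?b ! j < ?b ! 1) \<longleftrightarrow> (\<forall>i<k. L ! i < R)"
    using all_Suc_Suc_less_iff[of k "\<lambda>j. ?b ! j < ?b ! 1"] by (simp add: nth b1)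
  also have "(\<forall>j. 2 \<le> j \<and> Suc j < Suc (Suc k) \<longrightarrow> ?b ! j < ?b ! Suc j) \<longleftrightarrow>
      (\<forall>j. 1 < j \<and> j < Suc (Suc (k - 1)) \<longrightarrow> ?b ! j < ?b ! Suc j)"
    using k by (auto simp: Suc_le_eq)
  also have "\<dots> \<longleftrightarrow> (\<forall>i. Suc i < k \<longrightarrow> L ! i < L ! Suc i)"
    unfolding all_Suc_Suc_less_iff using k by (auto simp: nth)
  finally show ?thesis .
qed

lemma zero_in_occs_prepend_occ_overlap1_iff:
  assumes k: "k \<ge> 2" and p: "p \<in> perms n" and n: "n \<ge> 1" and p0: "p ! 0 = 1"
    and R: "R \<in> {1..n + k}"
  shows "0 \<in> occs (tau (Suc (Suc k))) (prepend_occ (Suc k) R p) \<longleftrightarrow> Suc k \<le> R"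
proof -
  define L where "L = (perm_cons 1 ^^ (Suc k - 2)) p"
  have L: "L ! i = Suc i" if "i < k" for i
    unfolding L_def using that k n p0 perms_ge_1[OF p] length_perms[OF p]
    by (subst perm_cons_1_funpow_nth) auto
  have "(\<forall>i<k. L ! i < R) \<and> (\<forall>i. Suc i < k \<longrightarrow> L ! i < L ! Suc i) \<longleftrightarrow> Suc k \<le> R"
    using k by (auto simp: L dest: spec[of _ "k - 1"])
  moreover have "0 \<in> occs (tau (Suc (Suc k))) (prepend_occ (Suc k) R p) \<longleftrightarrow>
      (\<forall>i<k. L ! i < R) \<and> (\<forall>i. Suc i < k \<longrightarrow> L ! i < L ! Suc i)"
    unfolding L_def using k n R by (intro zero_in_occs_prepend_occ_iff[OF k p]) auto
  ultimately show ?thesis by simp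
qed

lemma zero_in_occs_prepend_occ_overlap2_iff:
  assumes k: "k \<ge> 2" and p: "p \<in> perms n" and n: "n \<ge> 2" and p0: "p ! 0 = 1"
    and R: "R \<in> {1..n + k - 1}"
  shows "0 \<in> occs (tau (Suc (Suc k))) (prepend_occ k R p) \<longleftrightarrow> p ! 1 + k - 1 \<le> R"
proof -
  define L where "L = (perm_cons 1 ^^ (k - 2)) p"
  have "p ! 1 \<noteq> p ! 0" "p ! 1 \<in> set p"
    using p n length_perms[OF p] by (auto simp: perms_def nth_eq_iff_index_eq)
  then have p1: "p ! 1 \<ge> 2" using p0 perms_ge_1[OF p] by fastforce
  have facts: "\<forall>x \<in> set p. 1 \<le> x" "length p = n"
    using perms_ge_1[OF p] length_perms[OF p] by auto
  have L1: "L ! i = Suc i" if "i < k - 1" for i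
    unfolding L_def using that k n p0 facts by (subst perm_cons_1_funpow_nth) auto
  have L2: "L ! (k - 1) = p ! 1 + k - 2"
    unfolding L_def using k n facts
    by (subst perm_cons_1_funpow_nth) (auto simp: Suc_diff_Suc numeral_2_eq_2)
  have L: "L ! i = (if i < k - 1 then Suc i else p ! 1 + k - 2)" if "i < k" for i
  proof (cases "i < k - 1")
    case False
    then have "i = k - 1" using that by arith
    then show ?thesis using L2 by simp
  qed (simp add: L1)
  have "(\<forall>i<k. L ! i < R) \<and> (\<forall>i. Suc i < k \<longrightarrow> L ! i < L ! Suc i) \<longleftrightarrow> p ! 1 + k - 1 \<le> R"
    using k p1 by (auto simp: L dest: spec[of _ "k - 1"])
  moreover have "0 \<in> occs (tau (Suc (Suc k))) (prepend_occ k R p) \<longleftrightarrow>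
      (\<forall>i<k. L ! i < R) \<and> (\<forall>i. Suc i < k \<longrightarrow> L ! i < L ! Suc i)"
    unfolding L_def using k n R by (intro zero_in_occs_prepend_occ_iff[OF k p]) auto
  ultimately show ?thesis by simp
qed

lemma occs_prepend_occ:
  assumes k: "k \<ge> 2" and g: "g = k \<or> g = Suc k" and p: "p \<in> perms n"
    and R: "R \<in> {1..n + g - 1}"
    and p_cluster: "(is_cluster (tau (Suc (Suc k))) p \<and> n \<ge> 1) \<or> (n = 1 \<and> g = Suc k)"
    and first: "0 \<in> occs (tau (Suc (Suc k))) (prepend_occ g R p)"
  shows "occs (tau (Suc (Suc k))) (prepend_occ g R p) = insert 0 ((\<lambda>i. i + g) ` occs (tau (Suc (Suc k))) p)"
proof (intro set_eqI iffI)
  let ?m = "Suc (Suc k)" and ?b = "prepend_occ g R p"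
  let ?O = "occs (tau ?m) ?b" and ?O' = "occs (tau ?m) p"
  have g2: "g \<ge> 2" and m4: "?m \<ge> 4" and m2: "?m \<ge> 2" using g k by auto
  have bp: "?b \<in> perms (n + g)" using prepend_occ_in_perms[OF p g2 R] .
  have db: "distinct ?b" using bp by (simp add: perms_def)
  have shift: "i + g \<in> ?O \<longleftrightarrow> i \<in> ?O'" for i using in_occs_prepend_occ[OF g2] .
  fix x assume x: "x \<in> ?O"
  show "x \<in> insert 0 ((\<lambda>i. i + g) ` ?O')"
  proof (cases "x = 0 \<or> g \<le> x")
    case True
    then show ?thesis using shift[of "x - g"] x by (auto intro: rev_image_eqI[of "x - g"])
  next
    case False
    then have "x = k" "g = Suc k"
      using occs_tau_overlap[OF m4 db first x] g by auto
    moreover have "x + ?m \<le> n + g" using occs_tau_bound[OF m2 x] length_perms[OF bp] by simp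
    ultimately have "n \<noteq> 1" using k by simp
    then have "is_cluster (tau ?m) p" "n \<ge> 1" using p_cluster by auto
    then have "g \<in> ?O" using shift[of 0] cluster_0_in_occs[OF m2] length_perms[OF p] by simp
    then show ?thesis
      using occs_tau_overlap[OF m4 db x, of g] \<open>x = k\<close> \<open>g = Suc k\<close> k by simp
  qed
next
  fix x assume "x \<in> insert 0 ((\<lambda>i. i + g) ` occs (tau (Suc (Suc k))) p)"
  then show "x \<in> occs (tau (Suc (Suc k))) (prepend_occ g R p)"
    using first in_occs_prepend_occ[of g] g k by auto
qed

lemma card_occs_prepend_occ:
  assumes "g \<ge> 2"
    and "occs sigma (prepend_occ g R p) = insert 0 ((\<lambda>i. i + g) ` occs sigma p)"
  shows "card (occs sigma (prepend_occ g R p)) = Suc (card (occs sigma p))"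
  using assms by (simp add: card_image finite_occs image_iff)

lemma is_cluster_prepend_occ:
  assumes k: "k \<ge> 2" and g: "g = k \<or> g = Suc k" and p: "p \<in> perms n"
    and R: "R \<in> {1..n + g - 1}"
    and p_cluster: "(is_cluster (tau (Suc (Suc k))) p \<and> n \<ge> 1) \<or> (n = 1 \<and> g = Suc k)"
    and first: "0 \<in> occs (tau (Suc (Suc k))) (prepend_occ g R p)"
  shows "is_cluster (tau (Suc (Suc k))) (prepend_occ g R p)"
proof -
  let ?m = "Suc (Suc k)" and ?b = "prepend_occ g R p"
  let ?O = "occs (tau ?m) ?b" and ?O' = "occs (tau ?m) p"
  have g2: "g \<ge> 2" and m2: "?m \<ge> 2" using g k by auto
  have bp: "?b \<in> perms (n + g)" using prepend_occ_in_perms[OF p g2 R] .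
  have O: "?O = insert 0 ((\<lambda>i. i + g) ` ?O')"
    using occs_prepend_occ[OF k g p R p_cluster first] .
  show ?thesis
  proof (cases "is_cluster (tau ?m) p \<and> n \<ge> 1")
    case True
    have gO: "g \<in> ?O" using O cluster_0_in_occs[OF m2] True length_perms[OF p] by auto
    have gmin: "\<forall>i \<in> ?O. 0 < i \<longrightarrow> g \<le> i" using O by auto
    have gl: "g \<le> length ?b" using length_perms[OF bp] by simp
    have "is_cluster (tau ?m) (drop g ?b)"
    proof -
      have "order_iso ((perm_tl ^^ g) ?b) (drop g ?b)"
        using perm_tl_funpow[OF bp, of g] by simp
      then show ?thesis
        using True is_cluster_order_iso perm_tl_funpow_prepend_occ[OF g2] by metis
    qed
    then show ?thesis
      using is_cluster_from_drop[OF m2 gl first gO _ _ gmin] g2 g by auto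
  next
    case False
    then have "n = 1" "g = Suc k" using p_cluster by auto
    then have "?O' = {}" using occs_tau_bound[OF m2, of _ p] length_perms[OF p] by fastforce
    then show ?thesis
      using is_cluster_single_occ[OF m2] O length_perms[OF bp] \<open>n = 1\<close> \<open>g = Suc k\<close> by simp
  qed
qed

lemma hd_perm_tl_funpow_eq_1:
  assumes p: "p \<in> perms n" and j: "j < n"
    and min: "\<And>l. 0 < l \<Longrightarrow> j + l < n \<Longrightarrow> p ! j < p ! (j + l)"
  shows "hd ((perm_tl ^^ j) p) = 1"
proof -
  let ?y = "(perm_tl ^^ j) p"
  have y: "?y \<in> perms (Suc (n - j - 1))" and iso: "order_iso ?y (drop j p)"
    using perm_tl_funpow[OF p, of j] j by (simp_all add: Suc_diff_Suc)
  have "?y ! 0 < ?y ! i" if "i < Suc (n - j - 1)" "0 < i" for i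
    using min[of i] order_iso_nth[OF iso, of 0 i] length_perms[OF y] length_perms[OF p] that j
    by simp
  then show ?thesis using hd_eq_1_iff[OF y] by blast
qed

lemma perm_cons_1_funpow_perm_tl_funpow:
  assumes "x \<in> perms (N + j)" and "\<forall>i<j. hd ((perm_tl ^^ i) x) = 1"
  shows "(perm_cons 1 ^^ j) ((perm_tl ^^ j) x) = x"
  using assms
proof (induction j arbitrary: x)
  case (Suc j)
  have x: "x \<in> perms (Suc (N + j))" using Suc.prems by simp
  have "hd x = 1" using Suc.prems(2) by force
  then have x_eq: "perm_cons 1 (perm_tl x) = x" using perm_cons_hd_perm_tl[OF x] by simp
  have "\<forall>i<j. hd ((perm_tl ^^ i) (perm_tl x)) = 1"
    using Suc.prems(2) by (auto simp flip: funpow_swap1)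
  then have "(perm_cons 1 ^^ j) ((perm_tl ^^ j) (perm_tl x)) = perm_tl x"
    using Suc.IH perm_tl_in_perms[OF x] by blast
  then show ?case using x_eq by (simp add: funpow_swap1)
qed simp

lemma eq_prepend_occ_perm_tl_funpow:
  assumes p: "p \<in> perms n" and g: "2 \<le> g" "g < n"
    and ones: "\<And>j. j < g \<Longrightarrow> j \<noteq> 1 \<Longrightarrow> hd ((perm_tl ^^ j) p) = 1"
  shows "p = prepend_occ g (hd (perm_tl p)) ((perm_tl ^^ g) p)"
    and "hd (perm_tl p) \<in> {1..n - 1}"
proof -
  have p': "p \<in> perms (Suc (n - 1))" using p g by simp
  have q: "perm_tl p \<in> perms (Suc (n - 2))"
    using perm_tl_in_perms[OF p'] g by (simp add: numeral_2_eq_2 Suc_diff_Suc)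
  have "Suc (n - 2) = n - 1" using g by simp
  then show "hd (perm_tl p) \<in> {1..n - 1}" using hd_in_perms[OF q] by simp
  have tl2: "(perm_tl ^^ i) (perm_tl (perm_tl p)) = (perm_tl ^^ (i + 2)) p" for i
    by (simp add: numeral_2_eq_2 funpow_swap1)
  have "perm_tl (perm_tl p) \<in> perms ((n - g) + (g - 2))"
    using perm_tl_in_perms[OF q] g by simp
  moreover have "\<forall>i<g - 2. hd ((perm_tl ^^ i) (perm_tl (perm_tl p))) = 1"
  proof (intro allI impI)
    fix i assume "i < g - 2"
    then have "hd ((perm_tl ^^ (i + 2)) p) = 1" using ones[of "i + 2"] by simp
    then show "hd ((perm_tl ^^ i) (perm_tl (perm_tl p))) = 1" by (simp only: tl2)
  qed
  ultimately have "(perm_cons 1 ^^ (g - 2)) ((perm_tl ^^ (g - 2)) (perm_tl (perm_tl p))) =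
      perm_tl (perm_tl p)"
    by (rule perm_cons_1_funpow_perm_tl_funpow)
  moreover have "(perm_tl ^^ (g - 2)) (perm_tl (perm_tl p)) = (perm_tl ^^ g) p"
  proof -
    have "g - 2 + 2 = g" using g by simp
    then show ?thesis using tl2[of "g - 2"] by (simp only:)
  qed
  ultimately have "(perm_cons 1 ^^ (g - 2)) ((perm_tl ^^ g) p) = perm_tl (perm_tl p)"
    by (simp only:)
  then show "p = prepend_occ g (hd (perm_tl p)) ((perm_tl ^^ g) p)"
    unfolding prepend_occ_def
    using perm_cons_hd_perm_tl[OF q] perm_cons_hd_perm_tl[OF p'] ones[of 0] g by simp
qed

text \<open>Every entry strictly between the second entry and the second occurrence lies below the first
  entry of that occurrence, which is the minimum of the remaining cluster.\<close>

lemma cluster_split: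
  assumes k: "k \<ge> 2" and p: "p \<in> perms n" and n: "n \<ge> Suc (Suc k)"
    and c: "is_cluster (tau (Suc (Suc k))) p"
  obtains g where "g = k \<or> g = Suc k"
    and "\<And>j l. 2 \<le> j \<Longrightarrow> j < g \<Longrightarrow> 0 < l \<Longrightarrow> j + l < n \<Longrightarrow> p ! j < p ! (j + l)"
    and "(is_cluster (tau (Suc (Suc k))) (drop g p) \<and> n - g \<ge> 1) \<or> (n - g = 1 \<and> g = Suc k)"
proof -
  let ?m = "Suc (Suc k)" and ?O = "occs (tau (Suc (Suc k))) p"
  have m4: "?m \<ge> 4" and m3: "?m \<ge> 3" and m2: "?m \<ge> 2" using k by simp_all
  have dp: "distinct p" and lp: "length p = n" using p length_perms[OF p] by (auto simp: perms_def)
  have z: "0 \<in> ?O" using cluster_0_in_occs[OF m2 c] lp n by simp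
  have incr: "2 \<le> a \<Longrightarrow> a < b \<Longrightarrow> b < ?m \<Longrightarrow> p ! a < p ! b" for a b
    using occs_tau_chain_less[OF m3 dp z] by simp
  show ?thesis
  proof (cases "\<exists>i \<in> ?O. i \<noteq> 0")
    case False
    then have "n = ?m" using cluster_length_single_occ[OF m2 c] lp n by fastforce
    then show ?thesis using that[of "Suc k"] incr by auto
  next
    case True
    obtain g where g: "g \<in> ?O" "0 < g" "\<forall>i \<in> ?O. 0 < i \<longrightarrow> g \<le> i" "g = k \<or> g = Suc k"
      using cluster_second_occ[OF m4 dp c True] by auto
    have gm: "g < ?m" and gl: "g + ?m \<le> n" using g(4) occs_tau_bound[OF m2 g(1)] lp by auto
    have cd: "is_cluster (tau ?m) (drop g p)" using is_cluster_drop[OF m2 c g(1,2) gm g(3)] .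
    have incr_g: "p ! j < p ! (j + l)" if jl: "2 \<le> j" "j < g" "0 < l" "j + l < n" for j l
    proof (cases "j + l < ?m")
      case False
      have "drop g p ! 0 < drop g p ! (j + l - g)"
        using cluster_nth_0_less[OF m4, of "drop g p" "j + l - g"] cd dp lp gl jl False gm
        by (simp add: distinct_drop)
      then have "p ! g < p ! (j + l)" using lp gl jl False gm by simp
      then show ?thesis using incr[of j g] jl gm by simp
    qed (use incr jl in simp)
    have "n - g \<ge> 1" using gl gm by simp
    then show ?thesis using that[of g] incr_g cd g(4) by blast
  qed
qed

lemma cluster_eq_prepend_occ:
  assumes k: "k \<ge> 2" and p: "p \<in> perms n" and n: "n \<ge> Suc (Suc k)"
    and c: "is_cluster (tau (Suc (Suc k))) p"
  obtains g R p' where "g = k \<or> g = Suc k" and "p' \<in> perms (n - g)"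
    and "(is_cluster (tau (Suc (Suc k))) p' \<and> n - g \<ge> 1) \<or> (n - g = 1 \<and> g = Suc k)"
    and "R \<in> {1..n - 1}" and "p = prepend_occ g R p'"
proof -
  have m4: "Suc (Suc k) \<ge> 4" using k by simp
  have dp: "distinct p" and lp: "length p = n" using p length_perms[OF p] by (auto simp: perms_def)
  obtain g where g: "g = k \<or> g = Suc k"
    and incr: "\<And>j l. 2 \<le> j \<Longrightarrow> j < g \<Longrightarrow> 0 < l \<Longrightarrow> j + l < n \<Longrightarrow> p ! j < p ! (j + l)"
    and rest: "(is_cluster (tau (Suc (Suc k))) (drop g p) \<and> n - g \<ge> 1) \<or> (n - g = 1 \<and> g = Suc k)"
    using cluster_split[OF k p n c] by blast
  have g2: "2 \<le> g" "g < n" using g k n by auto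
  have "hd ((perm_tl ^^ j) p) = 1" if "j < g" "j \<noteq> 1" for j
  proof (rule hd_perm_tl_funpow_eq_1[OF p])
    fix l assume "0 < l" "j + l < n"
    then show "p ! j < p ! (j + l)"
      using that incr cluster_nth_0_less[OF m4 dp c] lp by (cases "j = 0") auto
  qed (use that g2 in simp)
  note eq = eq_prepend_occ_perm_tl_funpow[OF p g2 this]
  have "p' \<in> perms (n - g) \<and> order_iso p' (drop g p)" if "p' = (perm_tl ^^ g) p" for p'
    using perm_tl_funpow[OF p, of g] g2 that by simp
  then show ?thesis
    using that[OF g _ _ eq(2) eq(1)] rest is_cluster_order_iso by blast
qed

section \<open>Signed cluster counts\<close>

definition clusters :: "nat \<Rightarrow> nat \<Rightarrow> nat list set" where
  "clusters k n = {p \<in> perms n. is_cluster (tau (Suc (Suc k))) p}"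

text \<open>Together with the one-point permutation, which counts as a cluster of length 1 (\<open>s\<^sub>1\<^sub>,\<^sub>0 = 1\<close>).\<close>

definition clusters' :: "nat \<Rightarrow> nat \<Rightarrow> nat list set" where
  "clusters' k n = (if n = 1 then perms 1 else clusters k n)"

definition occ_sign :: "nat \<Rightarrow> nat list \<Rightarrow> int" where
  "occ_sign k p = (-1) ^ card (occs (tau (Suc (Suc k))) p)"

definition signed_count :: "nat \<Rightarrow> nat \<Rightarrow> int" where
  "signed_count k n = (\<Sum>p \<in> clusters' k n. occ_sign k p)"

text \<open>The signed counts only satisfy a closed recursion after weighting each cluster by a binomial
  coefficient in the number \<open>n - p ! 1\<close> of entries above its second entry.\<close>

definition weighted_count :: "nat \<Rightarrow> nat \<Rightarrow> nat \<Rightarrow> int" where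
  "weighted_count k n j = (\<Sum>p \<in> clusters k n. occ_sign k p * int ((n - p ! 1) choose j))"

lemma finite_clusters: "finite (clusters k n)"
  by (simp add: clusters_def finite_perms)

lemma finite_clusters': "finite (clusters' k n)"
  by (simp add: clusters'_def finite_perms finite_clusters)

lemma clusters_eq_empty:
  assumes "k \<ge> 2" and "1 \<le> n" and "n < Suc (Suc k)"
  shows "clusters k n = {}"
proof -
  have "\<not> is_cluster (tau (Suc (Suc k))) p" if "p \<in> perms n" for p
    using assms cluster_0_in_occs[of "Suc (Suc k)" p] occs_tau_bound[of "Suc (Suc k)" 0 p]
      length_perms[OF that] by fastforce
  then show ?thesis by (auto simp: clusters_def)
qed

lemma cluster_nth_0:
  assumes k: "k \<ge> 2" and p: "p \<in> clusters' k n" and n: "n \<ge> 1"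
  shows "p ! 0 = 1"
proof (cases "n = 1")
  case True
  then show ?thesis using p perms_1 by (simp add: clusters'_def)
next
  case False
  then have p: "p \<in> perms (Suc (n - 1))" "is_cluster (tau (Suc (Suc k))) p"
    using p n by (auto simp: clusters'_def clusters_def)
  have "\<forall>i < Suc (n - 1). 0 < i \<longrightarrow> p ! 0 < p ! i"
    using cluster_nth_0_less[of "Suc (Suc k)" p] p k length_perms[OF p(1)] by (auto simp: perms_def)
  then have "hd p = 1" using hd_eq_1_iff[OF p(1)] by blast
  then show ?thesis using length_perms[OF p(1)] by (cases p) auto
qed

lemma sum_choose_diff:
  assumes "lo \<le> hi"
  shows "(\<Sum>R\<in>{lo..hi}. (hi - R) choose j) = Suc (hi - lo) choose Suc j"
proof -
  have "(\<Sum>R\<in>{lo..hi}. (hi - R) choose j) = (\<Sum>a\<le>hi - lo. a choose j)"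
    by (rule sum.reindex_bij_witness[where i = "\<lambda>a. hi - a" and j = "\<lambda>R. hi - R"])
      (use assms in auto)
  also have "\<dots> = Suc (hi - lo) choose Suc j" by (rule sum_choose_upper)
  finally show ?thesis .
qed

lemma prepend_occ_nth_1: "p \<in> perms n \<Longrightarrow> R \<ge> 1 \<Longrightarrow> prepend_occ g R p ! 1 = Suc R"
  by (simp add: prepend_occ_eq)

lemma prepend_occ_in_clusters:
  assumes k: "k \<ge> 2" and g: "g = k \<or> g = Suc k" and n: "g < n"
    and p: "p \<in> perms (n - g)" and R: "R \<in> {1..n - 1}"
    and p_cluster: "is_cluster (tau (Suc (Suc k))) p \<or> (n - g = 1 \<and> g = Suc k)"
    and first: "0 \<in> occs (tau (Suc (Suc k))) (prepend_occ g R p)"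
  shows "prepend_occ g R p \<in> clusters k n"
    and "occ_sign k (prepend_occ g R p) = - occ_sign k p"
proof -
  have R': "R \<in> {1..(n - g) + g - 1}" and g2: "g \<ge> 2" using R n g k by auto
  have pc: "(is_cluster (tau (Suc (Suc k))) p \<and> n - g \<ge> 1) \<or> (n - g = 1 \<and> g = Suc k)"
    using p_cluster n by auto
  show "prepend_occ g R p \<in> clusters k n"
    using is_cluster_prepend_occ[OF k g p R' pc first] prepend_occ_in_perms[OF p g2 R'] n
    by (simp add: clusters_def)
  show "occ_sign k (prepend_occ g R p) = - occ_sign k p"
    using card_occs_prepend_occ[OF g2 occs_prepend_occ[OF k g p R' pc first]]
    by (simp add: occ_sign_def)
qed

text \<open>Parameters of the clusters whose second occurrence starts at position \<open>k + 1\<close>, resp. \<open>k\<close>,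
  i.e. shares one, resp. two, entries with the first one.\<close>

definition overlap1_pairs :: "nat \<Rightarrow> nat \<Rightarrow> (nat list \<times> nat) set" where
  "overlap1_pairs k n = (SIGMA p:clusters' k (n - Suc k). {Suc k..n - 1})"

definition overlap2_pairs :: "nat \<Rightarrow> nat \<Rightarrow> (nat list \<times> nat) set" where
  "overlap2_pairs k n = (SIGMA p:clusters k (n - k). {p ! 1 + k - 1..n - 1})"

lemma prepend_occ_overlap1_in_clusters:
  assumes k: "k \<ge> 2" and n: "n \<ge> Suc (Suc k)" and pR: "(p, R) \<in> overlap1_pairs k n"
  shows "prepend_occ (Suc k) R p \<in> clusters k n"
    and "occ_sign k (prepend_occ (Suc k) R p) = - occ_sign k p"
proof -
  have p': "p \<in> clusters' k (n - Suc k)" and R: "R \<in> {Suc k..n - 1}"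
    using pR by (auto simp: overlap1_pairs_def)
  have p: "p \<in> perms (n - Suc k)" using p' by (auto simp: clusters'_def clusters_def split: if_splits)
  have first: "0 \<in> occs (tau (Suc (Suc k))) (prepend_occ (Suc k) R p)"
    using zero_in_occs_prepend_occ_overlap1_iff[OF k p _ cluster_nth_0[OF k p'], of R] n R by auto
  have "is_cluster (tau (Suc (Suc k))) p \<or> (n - Suc k = 1 \<and> Suc k = Suc k)"
    using p' by (auto simp: clusters'_def clusters_def split: if_splits)
  then show "prepend_occ (Suc k) R p \<in> clusters k n"
    and "occ_sign k (prepend_occ (Suc k) R p) = - occ_sign k p"
    using prepend_occ_in_clusters[OF k _ _ p _ _ first] n R by auto
qed

lemma prepend_occ_overlap2_in_clusters:
  assumes k: "k \<ge> 2" and n: "n \<ge> Suc (Suc k)" and pR: "(p, R) \<in> overlap2_pairs k n"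
  shows "prepend_occ k R p \<in> clusters k n"
    and "occ_sign k (prepend_occ k R p) = - occ_sign k p"
proof -
  have p': "p \<in> clusters k (n - k)" and R: "R \<in> {p ! 1 + k - 1..n - 1}"
    using pR by (auto simp: overlap2_pairs_def)
  have p: "p \<in> perms (n - k)" and c: "is_cluster (tau (Suc (Suc k))) p"
    using p' by (auto simp: clusters_def)
  have "n - k \<noteq> 1" using n by simp
  then have "p \<in> clusters' k (n - k)" using p' by (simp add: clusters'_def)
  then have "p ! 0 = 1" using cluster_nth_0[OF k] n by simp
  then have first: "0 \<in> occs (tau (Suc (Suc k))) (prepend_occ k R p)"
    using zero_in_occs_prepend_occ_overlap2_iff[OF k p, of R] n R k by auto
  show "prepend_occ k R p \<in> clusters k n"
    and "occ_sign k (prepend_occ k R p) = - occ_sign k p"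
    using prepend_occ_in_clusters[OF k _ _ p _ _ first] c n R k by auto
qed

lemma clusters_decomp:
  assumes k: "k \<ge> 2" and n: "n \<ge> Suc (Suc k)"
  shows "clusters k n = (\<lambda>(p, R). prepend_occ (Suc k) R p) ` overlap1_pairs k n
     \<union> (\<lambda>(p, R). prepend_occ k R p) ` overlap2_pairs k n"
proof (intro set_eqI iffI)
  fix q assume "q \<in> clusters k n"
  then have q: "q \<in> perms n" "is_cluster (tau (Suc (Suc k))) q" by (auto simp: clusters_def)
  obtain g R p where g: "g = k \<or> g = Suc k" and p: "p \<in> perms (n - g)"
    and p_cluster: "(is_cluster (tau (Suc (Suc k))) p \<and> n - g \<ge> 1) \<or> (n - g = 1 \<and> g = Suc k)"
    and R: "R \<in> {1..n - 1}" and q_eq: "q = prepend_occ g R p"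
    using cluster_eq_prepend_occ[OF k q(1) n q(2)] by blast
  have p': "p \<in> clusters' k (n - g)" using p_cluster p by (auto simp: clusters'_def clusters_def)
  have first: "0 \<in> occs (tau (Suc (Suc k))) (prepend_occ g R p)"
    using cluster_0_in_occs[OF _ q(2)] q_eq length_perms[OF q(1)] n by simp
  show "q \<in> (\<lambda>(p, R). prepend_occ (Suc k) R p) ` overlap1_pairs k n
     \<union> (\<lambda>(p, R). prepend_occ k R p) ` overlap2_pairs k n"
  proof (cases "g = Suc k")
    case True
    then have "Suc k \<le> R"
      using zero_in_occs_prepend_occ_overlap1_iff[OF k p _ cluster_nth_0[OF k p']] first R n by auto
    then have "(p, R) \<in> overlap1_pairs k n" using True p' R by (simp add: overlap1_pairs_def)
    then show ?thesis using q_eq True by force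
  next
    case False
    then have g: "g = k" and c: "is_cluster (tau (Suc (Suc k))) p" using g p_cluster by auto
    then have "n - k \<ge> Suc (Suc k)"
      using clusters_eq_empty[OF k, of "n - k"] p n by (fastforce simp: clusters_def)
    moreover have "p ! 0 = 1" using cluster_nth_0[OF k p'] n g by simp
    ultimately have "p ! 1 + k - 1 \<le> R"
      using zero_in_occs_prepend_occ_overlap2_iff[of k p "n - k" R] k first g p R n by auto
    then have "(p, R) \<in> overlap2_pairs k n" using g c p R by (simp add: overlap2_pairs_def clusters_def)
    then show ?thesis using q_eq g by force
  qed
next
  fix q assume "q \<in> (\<lambda>(p, R). prepend_occ (Suc k) R p) ` overlap1_pairs k n
     \<union> (\<lambda>(p, R). prepend_occ k R p) ` overlap2_pairs k n"
  then show "q \<in> clusters k n"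
    using prepend_occ_overlap1_in_clusters[OF k n] prepend_occ_overlap2_in_clusters[OF k n] by auto
qed

text \<open>The two cases are told apart by whether position \<open>k\<close> starts an occurrence.\<close>

lemma clusters_decomp_disjoint:
  assumes k: "k \<ge> 2" and n: "n \<ge> Suc (Suc k)"
  shows "(\<lambda>(p, R). prepend_occ (Suc k) R p) ` overlap1_pairs k n
     \<inter> (\<lambda>(p, R). prepend_occ k R p) ` overlap2_pairs k n = {}"
proof -
  let ?m = "Suc (Suc k)"
  have m2: "?m \<ge> 2" and m4: "?m \<ge> 4" using k by simp_all
  have "prepend_occ (Suc k) R p \<noteq> prepend_occ k R' p'"
    if pR: "(p, R) \<in> overlap1_pairs k n" and pR': "(p', R') \<in> overlap2_pairs k n" for p R p' R'
  proof
    assume eq: "prepend_occ (Suc k) R p = prepend_occ k R' p'"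
    let ?q = "prepend_occ k R' p'"
    have "?q \<in> clusters k n" using prepend_occ_overlap2_in_clusters(1)[OF k n pR'] .
    then have dq: "distinct ?q" and lq: "length ?q = n"
      by (auto simp: clusters_def perms_def intro: length_perms)
    have "0 \<in> occs (tau ?m) p'"
      using pR' cluster_0_in_occs[OF m2, of p'] length_perms[of p' "n - k"] n
      by (auto simp: overlap2_pairs_def clusters_def)
    then have kq: "k \<in> occs (tau ?m) ?q" using in_occs_prepend_occ[of k 0 _ R' p'] k by simp
    show False
    proof (cases "n - Suc k = 1")
      case True
      then show False using occs_tau_bound[OF m2 kq] lq k by simp
    next
      case False
      then have "p \<in> clusters k (n - Suc k)" using pR by (simp add: overlap1_pairs_def clusters'_def)
      then have "0 \<in> occs (tau ?m) p"
        using cluster_0_in_occs[OF m2, of p] length_perms[of p "n - Suc k"] n by (auto simp: clusters_def)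
      then have "0 + Suc k \<in> occs (tau ?m) (prepend_occ (Suc k) R p)"
        using in_occs_prepend_occ[of "Suc k" 0] k by simp
      then have "Suc k \<in> occs (tau ?m) ?q" using eq by simp
      then show False using occs_tau_overlap[OF m4 dq kq, of "Suc k"] k by simp
    qed
  qed
  then show ?thesis by fastforce
qed

lemma sum_overlap1_pairs:
  assumes k: "k \<ge> 2" and n: "n \<ge> Suc (Suc k)"
  shows "(\<Sum>(p, R)\<in>overlap1_pairs k n. occ_sign k (prepend_occ (Suc k) R p)
      * int ((n - prepend_occ (Suc k) R p ! 1) choose j))
    = - (int ((n - k - 1) choose Suc j) * signed_count k (n - Suc k))"
proof -
  have "(\<Sum>(p, R)\<in>overlap1_pairs k n. occ_sign k (prepend_occ (Suc k) R p)
      * int ((n - prepend_occ (Suc k) R p ! 1) choose j))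
    = (\<Sum>(p, R)\<in>overlap1_pairs k n. - occ_sign k p * int ((n - 1 - R) choose j))"
  proof (intro sum.cong refl, clarify)
    fix p R assume pR: "(p, R) \<in> overlap1_pairs k n"
    then have "p \<in> perms (n - Suc k)" "R \<ge> 1"
      by (auto simp: overlap1_pairs_def clusters'_def clusters_def split: if_splits)
    then show "occ_sign k (prepend_occ (Suc k) R p) * int ((n - prepend_occ (Suc k) R p ! 1) choose j)
      = - occ_sign k p * int ((n - 1 - R) choose j)"
      using prepend_occ_nth_1 prepend_occ_overlap1_in_clusters(2)[OF k n pR] by simp
  qed
  also have "\<dots> = (\<Sum>p\<in>clusters' k (n - Suc k). \<Sum>R\<in>{Suc k..n - 1}. - occ_sign k p * int ((n - 1 - R) choose j))"
    unfolding overlap1_pairs_def by (rule sum.Sigma[symmetric]) (simp_all add: finite_clusters')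
  also have "\<dots> = (\<Sum>p\<in>clusters' k (n - Suc k). - occ_sign k p * int ((n - k - 1) choose Suc j))"
  proof (intro sum.cong refl)
    fix p
    have "(\<Sum>R\<in>{Suc k..n - 1}. - occ_sign k p * int ((n - 1 - R) choose j))
        = - occ_sign k p * int (\<Sum>R\<in>{Suc k..n - 1}. (n - 1 - R) choose j)"
      by (simp add: sum_distrib_left)
    also have "(\<Sum>R\<in>{Suc k..n - 1}. (n - 1 - R) choose j) = (n - k - 1) choose Suc j"
      using sum_choose_diff[of "Suc k" "n - 1" j] n by (simp add: Suc_diff_Suc)
    finally show "(\<Sum>R\<in>{Suc k..n - 1}. - occ_sign k p * int ((n - 1 - R) choose j))
        = - occ_sign k p * int ((n - k - 1) choose Suc j)" .
  qed
  also have "\<dots> = - (int ((n - k - 1) choose Suc j) * signed_count k (n - Suc k))"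
    by (simp add: signed_count_def sum_distrib_left sum_negf mult.commute)
  finally show ?thesis .
qed

lemma sum_overlap2_pairs:
  assumes k: "k \<ge> 2" and n: "n \<ge> Suc (Suc k)"
  shows "(\<Sum>(p, R)\<in>overlap2_pairs k n. occ_sign k (prepend_occ k R p)
      * int ((n - prepend_occ k R p ! 1) choose j))
    = - weighted_count k (n - k) j - weighted_count k (n - k) (Suc j)"
proof -
  have "(\<Sum>(p, R)\<in>overlap2_pairs k n. occ_sign k (prepend_occ k R p)
      * int ((n - prepend_occ k R p ! 1) choose j))
    = (\<Sum>(p, R)\<in>overlap2_pairs k n. - occ_sign k p * int ((n - 1 - R) choose j))"
  proof (intro sum.cong refl, clarify)
    fix p R assume pR: "(p, R) \<in> overlap2_pairs k n"
    then have "p \<in> perms (n - k)" "R \<ge> 1"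
      using k by (auto simp: overlap2_pairs_def clusters_def)
    then show "occ_sign k (prepend_occ k R p) * int ((n - prepend_occ k R p ! 1) choose j)
      = - occ_sign k p * int ((n - 1 - R) choose j)"
      using prepend_occ_nth_1 prepend_occ_overlap2_in_clusters(2)[OF k n pR] by simp
  qed
  also have "\<dots> = (\<Sum>p\<in>clusters k (n - k). \<Sum>R\<in>{p ! 1 + k - 1..n - 1}. - occ_sign k p * int ((n - 1 - R) choose j))"
    unfolding overlap2_pairs_def by (rule sum.Sigma[symmetric]) (simp_all add: finite_clusters)
  also have "\<dots> = (\<Sum>p\<in>clusters k (n - k). - (occ_sign k p * int ((n - k - p ! 1) choose j))
      - occ_sign k p * int ((n - k - p ! 1) choose Suc j))"
  proof (intro sum.cong refl)
    fix p assume "p \<in> clusters k (n - k)"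
    then have p: "p \<in> perms (n - k)" by (simp add: clusters_def)
    then have "p ! 1 \<in> set p" using length_perms[OF p] n by simp
    then have p1: "1 \<le> p ! 1" "p ! 1 \<le> n - k" using p by (auto simp: perms_def)
    have "(\<Sum>R\<in>{p ! 1 + k - 1..n - 1}. - occ_sign k p * int ((n - 1 - R) choose j))
        = - occ_sign k p * int (\<Sum>R\<in>{p ! 1 + k - 1..n - 1}. (n - 1 - R) choose j)"
      by (simp add: sum_distrib_left)
    also have "(\<Sum>R\<in>{p ! 1 + k - 1..n - 1}. (n - 1 - R) choose j) = Suc (n - k - p ! 1) choose Suc j"
      using sum_choose_diff[of "p ! 1 + k - 1" "n - 1" j] p1 n by (simp add: ac_simps)
    finally show "(\<Sum>R\<in>{p ! 1 + k - 1..n - 1}. - occ_sign k p * int ((n - 1 - R) choose j))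
        = - (occ_sign k p * int ((n - k - p ! 1) choose j)) - occ_sign k p * int ((n - k - p ! 1) choose Suc j)"
      by (simp add: algebra_simps)
  qed
  also have "\<dots> = - weighted_count k (n - k) j - weighted_count k (n - k) (Suc j)"
    by (simp add: weighted_count_def sum_subtractf sum_negf)
  finally show ?thesis .
qed

lemma weighted_count_rec:
  assumes k: "k \<ge> 2" and n: "n \<ge> Suc (Suc k)"
  shows "weighted_count k n j = - (int ((n - k - 1) choose Suc j) * signed_count k (n - Suc k)
    + weighted_count k (n - k) j + weighted_count k (n - k) (Suc j))"
proof -
  let ?w = "\<lambda>p. occ_sign k p * int ((n - p ! 1) choose j)"
  have inj1: "inj_on (\<lambda>(p, R). prepend_occ (Suc k) R p) A" for A
    using prepend_occ_inj k by (auto simp: inj_on_def)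
  have inj2: "inj_on (\<lambda>(p, R). prepend_occ k R p) A" for A
    using prepend_occ_inj k by (auto simp: inj_on_def)
  have "weighted_count k n j = sum ?w ((\<lambda>(p, R). prepend_occ (Suc k) R p) ` overlap1_pairs k n)
      + sum ?w ((\<lambda>(p, R). prepend_occ k R p) ` overlap2_pairs k n)"
  proof -
    have "finite (overlap1_pairs k n)" "finite (overlap2_pairs k n)"
      by (simp_all add: overlap1_pairs_def overlap2_pairs_def finite_clusters finite_clusters')
    then show ?thesis
      unfolding weighted_count_def clusters_decomp[OF k n]
      by (intro sum.union_disjoint) (simp_all add: clusters_decomp_disjoint[OF k n])
  qed
  also have "\<dots> = (\<Sum>(p, R)\<in>overlap1_pairs k n. ?w (prepend_occ (Suc k) R p))
      + (\<Sum>(p, R)\<in>overlap2_pairs k n. ?w (prepend_occ k R p))"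
    by (simp only: sum.reindex[OF inj1] sum.reindex[OF inj2]) (simp add: comp_def split_def)
  finally show ?thesis
    using sum_overlap1_pairs[OF k n] sum_overlap2_pairs[OF k n] by simp
qed

text \<open>The \<open>h\<close>-th term of the closed form of \<open>weighted_count k n j\<close>; for \<open>j = 0\<close> these are the
  terms of the recursion for the signed cluster counts.\<close>

definition weighted_term :: "nat \<Rightarrow> nat \<Rightarrow> nat \<Rightarrow> nat \<Rightarrow> int" where
  "weighted_term k n j h = (if h * k + 2 \<le> n
     then (-1) ^ h * int ((n - 2 - h * k + h) choose (h + j)) * signed_count k (n - 1 - h * k) else 0)"

lemma weighted_term_eq_0:
  assumes k: "k \<ge> 1" and h: "h > n - k - 1"
  shows "weighted_term k n j h = 0"
proof -
  have "h + k \<le> h * k + 1"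
    using k h by (cases h) (simp_all add: add_mono)
  then have "\<not> h * k + 2 \<le> n" using h by linarith
  then show ?thesis by (simp add: weighted_term_def)
qed

lemma weighted_term_pascal:
  assumes k: "k \<ge> 1" and n: "n \<ge> k + 2" and h: "h \<ge> 1"
  shows "weighted_term k (n - k) j h + weighted_term k (n - k) (Suc j) h = - weighted_term k n j (Suc h)"
proof (cases "h * k + 2 \<le> n - k")
  case True
  define x where "x = n - k - 2 - h * k + h"
  have sx: "Suc x = n - 2 - Suc h * k + Suc h" and idx: "n - k - 1 - h * k = n - 1 - Suc h * k"
    using True n by (simp_all add: x_def algebra_simps)
  have "weighted_term k (n - k) j h + weighted_term k (n - k) (Suc j) h
      = (-1) ^ h * int ((x choose (h + j)) + (x choose Suc (h + j))) * signed_count k (n - 1 - Suc h * k)"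
    using True idx by (simp add: weighted_term_def x_def algebra_simps)
  also have "(x choose (h + j)) + (x choose Suc (h + j)) = Suc x choose Suc (h + j)" by simp
  moreover have "Suc h * k + 2 \<le> n" using True n by (simp add: algebra_simps)
  ultimately show ?thesis by (simp add: weighted_term_def sx)
next
  case False
  then have "\<not> Suc h * k + 2 \<le> n" using n by (simp add: algebra_simps)
  then show ?thesis using False by (simp add: weighted_term_def)
qed

lemma sum_weighted_term_shift:
  assumes k: "k \<ge> 1" and n: "n \<ge> k + 2"
  shows "weighted_term k n j 1 + (\<Sum>h=1..n - k. weighted_term k n j (Suc h)) = (\<Sum>h=1..n. weighted_term k n j h)"
proof -
  have "(\<Sum>h=1..n - k. weighted_term k n j (Suc h)) = (\<Sum>h=Suc 1..Suc (n - k). weighted_term k n j h)"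
    by (rule sum.shift_bounds_cl_Suc_ivl[symmetric])
  then have "weighted_term k n j 1 + (\<Sum>h=1..n - k. weighted_term k n j (Suc h))
      = weighted_term k n j 1 + (\<Sum>h=Suc 1..Suc (n - k). weighted_term k n j h)"
    by (simp only:)
  also have "\<dots> = (\<Sum>h=1..Suc (n - k). weighted_term k n j h)"
    by (rule sum.atLeast_Suc_atMost[symmetric]) simp
  also have "\<dots> = (\<Sum>h=1..n. weighted_term k n j h)"
    by (rule sum.mono_neutral_right[symmetric]) (use weighted_term_eq_0[OF k] n k in auto)
  finally show ?thesis .
qed

lemma weighted_count_closed:
  assumes k: "k \<ge> 2" and "n \<ge> 2"
  shows "weighted_count k n j = (\<Sum>h=1..n. weighted_term k n j h)"
  using assms(2)
proof (induction n arbitrary: j rule: less_induct)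
  case (less n)
  have k1: "k \<ge> 1" using k by simp
  show ?case
  proof (cases "n < Suc (Suc k)")
    case True
    have "weighted_term k n j h = 0" if "h \<ge> 1" for h
    proof -
      have "k \<le> h * k" using that by simp
      then have "\<not> h * k + 2 \<le> n" using True by linarith
      then show ?thesis by (simp add: weighted_term_def)
    qed
    then show ?thesis
      using clusters_eq_empty[OF k _ True] less.prems by (simp add: weighted_count_def)
  next
    case False
    then have n: "n \<ge> Suc (Suc k)" by simp
    have "weighted_count k (n - k) j + weighted_count k (n - k) (Suc j)
        = (\<Sum>h=1..n - k. weighted_term k (n - k) j h + weighted_term k (n - k) (Suc j) h)"
      using less.IH[of "n - k"] n k by (simp add: sum.distrib)
    also have "\<dots> = - (\<Sum>h=1..n - k. weighted_term k n j (Suc h))"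
      using weighted_term_pascal[OF k1] n by (simp add: sum_negf)
    moreover have "weighted_term k n j 1 = - (int ((n - k - 1) choose Suc j) * signed_count k (n - Suc k))"
    proof -
      have "n - 2 - 1 * k + 1 = n - k - 1" using n by simp
      then show ?thesis unfolding weighted_term_def using n by simp
    qed
    ultimately have "weighted_count k n j = weighted_term k n j 1 + (\<Sum>h=1..n - k. weighted_term k n j (Suc h))"
      using weighted_count_rec[OF k n, of j] by simp
    then show ?thesis using sum_weighted_term_shift[OF k1] n by simp
  qed
qed

lemma signed_count_rec:
  assumes k: "k \<ge> 2" and n: "n \<ge> 2"
  shows "signed_count k n = (\<Sum>h=1..n. if h * k + 2 \<le> n then (-1) ^ h * int ((n - 2 - h * k + h) choose h) * signed_count k (n - 1 - h * k) else 0)"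
proof -
  have "signed_count k n = weighted_count k n 0" unfolding signed_count_def weighted_count_def clusters'_def using n by simp
  also have "\<dots> = (\<Sum>h=1..n. weighted_term k n 0 h)" using weighted_count_closed[OF k n] .
  finally show ?thesis unfolding weighted_term_def add_0_right .
qed

lemma signed_count_1: "signed_count k 1 = 1"
proof -
  have "occs (tau (Suc (Suc k))) [1] = {}" unfolding occs_def by (auto simp: length_tau)
  then show ?thesis unfolding signed_count_def clusters'_def occ_sign_def perms_1 by simp
qed

lemma signed_count_eq_sum_s_cl:
  assumes n: "n \<ge> Suc (Suc k)"
  shows "signed_count k n = (\<Sum>j\<le>n. (-1) ^ j * int (s_cl (tau (Suc (Suc k))) n j))"
proof -
  let ?s = "tau (Suc (Suc k))"
  let ?C = "\<lambda>j. {p \<in> clusters k n. card (occs ?s p) = j}"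
  have card_occs: "card (occs ?s p) \<in> {..n}" if "p \<in> clusters k n" for p
  proof -
    have "occs ?s p \<subseteq> {..<n}"
      using that length_perms[of p n] by (auto simp: occs_def clusters_def length_tau)
    then show ?thesis using card_mono[of "{..<n}" "occs ?s p"] by simp
  qed
  have "signed_count k n = (\<Sum>j\<le>n. \<Sum>p\<in>?C j. occ_sign k p)"
    unfolding signed_count_def clusters'_def using n card_occs
    by (simp add: sum.group[symmetric, OF finite_clusters] image_subset_iff)
  also have "\<dots> = (\<Sum>j\<le>n. (-1) ^ j * int (card (?C j)))"
    by (intro sum.cong refl) (simp add: occ_sign_def)
  also have "\<dots> = (\<Sum>j\<le>n. (-1) ^ j * int (s_cl ?s n j))"
    using n by (simp add: s_cl_def length_tau clusters_def conj_assoc)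
  finally show ?thesis .
qed

lemma t_cl_tau_eq:
  assumes k: "k \<ge> 2" and n: "n \<ge> 1"
  shows "t_cl (tau (Suc (Suc k))) n = signed_count k n"
proof (cases "n < Suc (Suc k)")
  case True
  then have "s_cl (tau (Suc (Suc k))) n j = (if n = 1 \<and> j = 0 then 1 else 0)" for j
    by (simp add: s_cl_def length_tau)
  moreover have "n \<noteq> 1 \<Longrightarrow> signed_count k n = 0"
    using clusters_eq_empty[OF k n True] by (simp add: signed_count_def clusters'_def)
  ultimately show ?thesis
    using signed_count_1 by (cases "n = 1") (simp_all add: t_cl_def)
next
  case False
  then show ?thesis by (simp add: t_cl_def signed_count_eq_sum_s_cl)
qed

section \<open>The cluster generating function\<close>

unbundle fps_syntax

lemma prod_nth_vanish:
  fixes c :: "nat \<Rightarrow> 'a::comm_ring_1 fps"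
  assumes "\<And>j. c j $ 0 = 0" and "a < N"
  shows "(\<Prod>j<N. c j) $ a = 0"
  using assms(2)
proof (induction N arbitrary: a)
  case (Suc N)
  have "(\<Prod>j<Suc N. c j) $ a = (\<Sum>i=0..a. (\<Prod>j<N. c j) $ i * c N $ (a - i))"
    by (simp add: fps_mult_nth)
  also have "\<dots> = 0"
  proof (intro sum.neutral ballI)
    fix i assume "i \<in> {0..a}"
    then show "(\<Prod>j<N. c j) $ i * c N $ (a - i) = 0"
      using Suc assms(1) by (cases "i = a") auto
  qed
  finally show ?case .
qed simp

lemma iterate_compose_nth_0:
  fixes B :: "'a::comm_ring_1 fps"
  assumes "B $ 0 = 0"
  shows "(((\<lambda>f. B oo f) ^^ j) fps_X) $ 0 = 0"
  using assms by (induction j) simp_all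

lemma sums_iterate_compose:
  fixes B F :: "'a::field fps"
  assumes B0: "B $ 0 = 0" and F: "F = fps_X / (1 + fps_X) * (1 + (F oo B))"
  shows "(\<lambda>n. \<Prod>j\<le>n. ((\<lambda>f. B oo f) ^^ j) fps_X / (1 + ((\<lambda>f. B oo f) ^^ j) fps_X)) sums F"
proof -
  define Bj where "Bj j = ((\<lambda>f. B oo f) ^^ j) fps_X" for j
  define c where "c j = Bj j / (1 + Bj j)" for j
  have Bj0: "Bj j $ 0 = 0" for j
    unfolding Bj_def using iterate_compose_nth_0[OF B0] .
  have c0: "c j $ 0 = 0" for j
    by (simp add: c_def fps_divide_unit Bj0)
  have step: "F oo Bj j = c j * (1 + (F oo Bj (Suc j)))" for j
  proof -
    have "F oo Bj j = Bj j / (1 + Bj j) * ((1 + (F oo B)) oo Bj j)"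
      by (subst F) (simp add: fps_divide_unit fps_compose_mult_distrib[OF Bj0]
          fps_inverse_compose[OF Bj0] fps_compose_add_distrib Bj0)
    also have "(1 + (F oo B)) oo Bj j = 1 + (F oo Bj (Suc j))"
      by (simp add: Bj_def fps_compose_add_distrib fps_compose_assoc[OF Bj0[unfolded Bj_def] B0])
    finally show ?thesis unfolding c_def .
  qed
  have partial: "F = (\<Sum>n<N. \<Prod>j\<le>n. c j) + (\<Prod>j<N. c j) * (F oo Bj N)" for N
  proof (induction N)
    case 0
    show ?case by (simp add: Bj_def)
  next
    case (Suc N)
    then show ?case
      by (simp add: step[of N] lessThan_Suc_atMost[symmetric] algebra_simps)
  qed
  have "(\<lambda>N. \<Sum>n<N. \<Prod>j\<le>n. c j) \<longlonglongrightarrow> F"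
  proof (rule tendsto_fpsI)
    fix a
    have "(\<Sum>n<N. \<Prod>j\<le>n. c j) $ a = F $ a" if "a < N" for N
    proof -
      have "((\<Prod>j<N. c j) * (F oo Bj N)) $ a = 0"
        using prod_nth_vanish[OF c0] that by (auto simp: fps_mult_nth intro!: sum.neutral)
      then show ?thesis using partial[of N] by (metis add.right_neutral fps_add_nth)
    qed
    then show "\<forall>\<^sub>F N in sequentially. (\<Sum>n<N. \<Prod>j\<le>n. c j) $ a = F $ a"
      by (intro eventually_sequentiallyI[of "Suc a"]) simp
  qed
  then show ?thesis unfolding sums_def c_def Bj_def .
qed

definition inv_pow_coeff :: "nat \<Rightarrow> nat \<Rightarrow> nat \<Rightarrow> 'a::comm_ring_1" where
  "inv_pow_coeff k i M =
     (if k dvd M then (-1) ^ (M div k) * of_nat ((i + M div k - 1) choose (M div k)) else 0)"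

lemma inv_pow_coeff_0: "k \<ge> 1 \<Longrightarrow> inv_pow_coeff k 0 M = (if M = 0 then 1 else 0)"
  by (auto simp: inv_pow_coeff_def binomial_eq_0)

lemma inv_pow_coeff_Suc:
  assumes k: "k \<ge> 1"
  shows "inv_pow_coeff k (Suc i) M =
    inv_pow_coeff k i M - (if M < k then 0 else inv_pow_coeff k (Suc i) (M - k))"
proof (cases "M < k")
  case True
  then show ?thesis using k by (auto simp: inv_pow_coeff_def elim!: dvdE)
next
  case False
  then have dvd_iff: "k dvd M \<longleftrightarrow> k dvd (M - k)"
    by (simp add: dvd_diff_nat dvd_minus_self)
  show ?thesis
  proof (cases "k dvd M")
    case True
    define q where "q = (M - k) div k"
    have div: "M div k = Suc q"
      using False k by (simp add: q_def le_div_geq)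
    have idx: "Suc i + Suc q - 1 = Suc (i + q)" "i + Suc q - 1 = i + q" "Suc i + q - 1 = i + q"
      by simp_all
    show ?thesis
      using True False unfolding inv_pow_coeff_def dvd_iff div q_def[symmetric]
      by (simp only: if_True if_False idx binomial_Suc_Suc of_nat_add power_Suc) (simp add: ring_distribs)
  next
    case False
    then show ?thesis using \<open>\<not> M < k\<close> by (simp add: inv_pow_coeff_def dvd_iff)
  qed
qed

lemma inverse_pow_Suc_nth:
  fixes k :: nat
  assumes k: "k \<ge> 1"
  defines "D \<equiv> inverse (1 + fps_X ^ k :: 'a::field fps)"
  shows "(D ^ Suc i) $ M = (D ^ i) $ M - (if M < k then 0 else (D ^ Suc i) $ (M - k))"
proof -
  have "D ^ Suc i * (1 + fps_X ^ k) = D ^ i"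
    using k by (simp add: D_def mult_ac inverse_mult_eq_1 inverse_mult_eq_1')
  then have "(D ^ i) $ M = (D ^ Suc i) $ M + (fps_X ^ k * D ^ Suc i) $ M"
    by (metis distrib_left fps_add_nth mult.commute mult.right_neutral)
  then show ?thesis by (simp add: fps_X_power_mult_nth)
qed

lemma inverse_pow_nth:
  assumes k: "k \<ge> 1"
  shows "(inverse (1 + fps_X ^ k :: 'a::field fps) ^ i) $ M = inv_pow_coeff k i M"
proof (induction i arbitrary: M)
  case 0
  show ?case using k by (simp add: inv_pow_coeff_0)
next
  case (Suc i)
  show ?case
  proof (induction M rule: less_induct)
    case (less M)
    have "(inverse (1 + fps_X ^ k :: 'a fps) ^ Suc i) $ M = inv_pow_coeff k i M
        - (if M < k then 0 else inv_pow_coeff k (Suc i) (M - k))"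
      by (subst inverse_pow_Suc_nth[OF k]) (use less k Suc.IH in \<open>simp del: power_Suc\<close>)
    then show ?case by (simp only: inv_pow_coeff_Suc[OF k, of i M])
  qed
qed

lemma Bm_eq: "Bm (Suc (Suc k)) = fps_X * inverse (1 + fps_X ^ k)"
  unfolding Bm_def by (simp add: fps_divide_unit)

lemma Bm_power_nth:
  assumes k: "k \<ge> 1"
  shows "(Bm (Suc (Suc k)) ^ i) $ N = (if N < i then 0 else inv_pow_coeff k i (N - i))"
  by (simp add: Bm_eq power_mult_distrib fps_X_power_mult_nth inverse_pow_nth[OF k])

lemma compose_Bm_nth:
  assumes k: "k \<ge> 1" and N: "N \<ge> 1"
  shows "(T oo Bm (Suc (Suc k))) $ N = (\<Sum>i=1..<N. T $ i * inv_pow_coeff k i (N - i)) + T $ N"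
proof -
  have "(T oo Bm (Suc (Suc k))) $ N = (\<Sum>i=0..N. T $ i * inv_pow_coeff k i (N - i))"
    by (simp add: fps_compose_nth Bm_power_nth[OF k])
  also have "\<dots> = (\<Sum>i=1..N. T $ i * inv_pow_coeff k i (N - i))"
    using k N by (simp add: sum.atLeast_Suc_atMost inv_pow_coeff_0)
  also have "\<dots> = (\<Sum>i=1..<N. T $ i * inv_pow_coeff k i (N - i)) + T $ N"
    using N by (simp add: sum.last_plus inv_pow_coeff_def)
  finally show ?thesis .
qed

lemma sum_inv_pow_coeff_reindex:
  fixes f :: "nat \<Rightarrow> 'a::comm_ring_1"
  assumes k: "k \<ge> 1"
  shows "(\<Sum>i=1..<N. f i * inv_pow_coeff k i (N - i)) =
    (\<Sum>h=1..Suc N. if h * k + 2 \<le> Suc N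
       then (-1) ^ h * of_nat ((Suc N - 2 - h * k + h) choose h) * f (Suc N - 1 - h * k) else 0)"
proof -
  define A where "A = {h \<in> {1..Suc N}. h * k + 2 \<le> Suc N}"
  define I where "I = {i \<in> {1..<N}. k dvd (N - i)}"
  have "(\<Sum>i=1..<N. f i * inv_pow_coeff k i (N - i)) = (\<Sum>i\<in>I. f i * inv_pow_coeff k i (N - i))"
    unfolding I_def by (rule sum.mono_neutral_right) (auto simp: inv_pow_coeff_def)
  also have "\<dots> = (\<Sum>h\<in>A. (-1) ^ h * of_nat ((Suc N - 2 - h * k + h) choose h) * f (Suc N - 1 - h * k))"
  proof (rule sum.reindex_bij_witness[where i = "\<lambda>h. N - h * k" and j = "\<lambda>i. (N - i) div k"])
    fix i assume "i \<in> I"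
    then have i: "1 \<le> i" "i < N" "k dvd (N - i)" by (auto simp: I_def)
    then obtain h where h: "N - i = k * h" by (auto elim!: dvdE)
    have h1: "h \<ge> 1" using h i by (cases h) auto
    have div: "(N - i) div k = h" using h k by simp
    have i_eq: "i = N - h * k" using h i by (simp add: algebra_simps)
    have "h \<le> h * k" using k by simp
    moreover have "h * k = N - i" using h by (simp add: mult.commute)
    ultimately have hN: "h \<le> N" by linarith
    show "N - (N - i) div k * k = i" using h k i by (simp add: mult.commute)
    show "(N - i) div k \<in> A" unfolding A_def div using h h1 hN i by (auto simp: algebra_simps)
    have binom: "Suc N - 2 - h * k + h = i + h - 1" using i_eq h1 i by simp
    show "(-1) ^ ((N - i) div k) * of_nat ((Suc N - 2 - (N - i) div k * k + (N - i) div k) choose ((N - i) div k))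
        * f (Suc N - 1 - (N - i) div k * k) = f i * inv_pow_coeff k i (N - i)"
      unfolding div binom inv_pow_coeff_def using h i_eq by (simp add: algebra_simps)
  next
    fix h assume "h \<in> A"
    then have h: "h \<ge> 1" "h * k + 2 \<le> Suc N" by (auto simp: A_def)
    show "(N - (N - h * k)) div k = h" using h k by simp
    have "h * k \<ge> 1" using h k by (simp add: one_le_mult_iff)
    then show "N - h * k \<in> I" unfolding I_def using h by auto
  qed
  also have "\<dots> = (\<Sum>h=1..Suc N. if h * k + 2 \<le> Suc N
       then (-1) ^ h * of_nat ((Suc N - 2 - h * k + h) choose h) * f (Suc N - 1 - h * k) else 0)"
    unfolding A_def by (rule sum.inter_filter) simp
  finally show ?thesis .
qed
lemma compose_Bm_nth_of_rec:
  fixes t :: "nat \<Rightarrow> int"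
  assumes k: "k \<ge> 1" and N: "N \<ge> 1"
    and rec: "\<And>n. n \<ge> 2 \<Longrightarrow> t n = (\<Sum>h=1..n. if h * k + 2 \<le> n
       then (-1) ^ h * int ((n - 2 - h * k + h) choose h) * t (n - 1 - h * k) else 0)"
    and T: "\<And>n. n \<ge> 1 \<Longrightarrow> T $ n = of_int (t n)"
  shows "(T oo Bm (Suc (Suc k))) $ N = of_int (t N + t (Suc N))"
proof -
  have "of_int (t (Suc N)) = (\<Sum>h=1..Suc N. of_int (if h * k + 2 \<le> Suc N
     then (-1) ^ h * int ((Suc N - 2 - h * k + h) choose h) * t (Suc N - 1 - h * k) else 0) :: rat)"
    using rec[of "Suc N"] N by (simp only: of_int_sum)
  also have "\<dots> = (\<Sum>i=1..<N. of_int (t i) * inv_pow_coeff k i (N - i))"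
    unfolding sum_inv_pow_coeff_reindex[OF k] by (intro sum.cong) auto
  also have "\<dots> = (\<Sum>i=1..<N. T $ i * inv_pow_coeff k i (N - i))"
    by (intro sum.cong) (auto simp: T)
  finally show ?thesis using N by (simp add: compose_Bm_nth[OF k N] T)
qed
lemma functional_equation_of_rec:
  fixes t :: "nat \<Rightarrow> int"
  assumes k: "k \<ge> 1" and t1: "t 1 = 1"
    and rec: "\<And>n. n \<ge> 2 \<Longrightarrow> t n = (\<Sum>h=1..n. if h * k + 2 \<le> n
       then (-1) ^ h * int ((n - 2 - h * k + h) choose h) * t (n - 1 - h * k) else 0)"
  defines "T \<equiv> Abs_fps (\<lambda>n. if n = 0 then 1 else of_int (t n)) :: rat fps"
  shows "T = 1 + fps_X / (1 + fps_X) * (T oo Bm (Suc (Suc k)))"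
proof -
  have Tn: "T $ n = (if n = 0 then 1 else of_int (t n))" for n
    by (simp add: T_def)
  have coeff: "(T oo Bm (Suc (Suc k))) $ N = of_int (t N + t (Suc N))" if "N \<ge> 1" for N
    using compose_Bm_nth_of_rec[OF k that rec] Tn by simp
  have E: "(T - 1) * (1 + fps_X) = fps_X * (T oo Bm (Suc (Suc k)))"
  proof (rule fps_ext)
    fix n
    show "((T - 1) * (1 + fps_X)) $ n = (fps_X * (T oo Bm (Suc (Suc k)))) $ n"
      by (cases n) (auto simp: algebra_simps Tn t1[unfolded One_nat_def] coeff)
  qed
  have "fps_X / (1 + fps_X) * (T oo Bm (Suc (Suc k))) = inverse (1 + fps_X) * ((T - 1) * (1 + fps_X))"
    unfolding E by (simp add: fps_divide_unit mult_ac)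
  also have "\<dots> = T - 1"
    by (simp add: mult.left_commute inverse_mult_eq_1)
  finally show ?thesis by simp
qed

lemma Bm_nth_0: "Bm m $ 0 = 0"
  unfolding Bm_def by (simp add: fps_divide_unit)

lemma T_cl_tau_functional_equation:
  assumes "m \<ge> 4"
  shows "T_cl (tau m) = 1 + fps_X / (1 + fps_X) * (T_cl (tau m) oo Bm m)"
proof -
  define k where "k = m - 2"
  have m: "m = Suc (Suc k)" and k: "k \<ge> 2"
    using assms by (simp_all add: k_def)
  have t_cl_rec: "t_cl (tau m) n = (\<Sum>h=1..n. if h * k + 2 \<le> n
      then (-1) ^ h * int ((n - 2 - h * k + h) choose h) * t_cl (tau m) (n - 1 - h * k) else 0)"
    if n: "n \<ge> 2" for n
  proof -
    have "t_cl (tau m) n = signed_count k n"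
      using n by (simp add: m t_cl_tau_eq[OF k])
    also have "\<dots> = (\<Sum>h=1..n. if h * k + 2 \<le> n
      then (-1) ^ h * int ((n - 2 - h * k + h) choose h) * signed_count k (n - 1 - h * k) else 0)"
      by (rule signed_count_rec[OF k n])
    also have "\<dots> = (\<Sum>h=1..n. if h * k + 2 \<le> n
      then (-1) ^ h * int ((n - 2 - h * k + h) choose h) * t_cl (tau m) (n - 1 - h * k) else 0)"
      by (intro sum.cong) (auto simp: m t_cl_tau_eq[OF k])
    finally show ?thesis .
  qed
  have "t_cl (tau m) 1 = 1"
    unfolding m t_cl_tau_eq[OF k order.refl] by (rule signed_count_1)
  from functional_equation_of_rec[of k, OF _ this t_cl_rec] k show ?thesis
    unfolding m T_cl_def by simp
qed

theorem theorem2p9: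
  fixes m :: nat
  assumes "m \<ge> 4"
  shows "(\<lambda>n. \<Prod>j\<le>n. Bmj m j / (1 + Bmj m j)) sums (T_cl (tau m) - 1)"
proof -
  have "T_cl (tau m) - 1 = fps_X / (1 + fps_X) * (T_cl (tau m) oo Bm m)"
    using T_cl_tau_functional_equation[OF assms] by (metis add_diff_cancel_left')
  also have "T_cl (tau m) oo Bm m = 1 + ((T_cl (tau m) - 1) oo Bm m)"
    by (simp add: fps_compose_sub_distrib)
  finally have "T_cl (tau m) - 1 = fps_X / (1 + fps_X) * (1 + ((T_cl (tau m) - 1) oo Bm m))" .
  then show ?thesis
    unfolding Bmj_def by (rule sums_iterate_compose[OF Bm_nth_0])
qed

end
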